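(* Let $\mathsf P\subset\mathbb R^m$ be a $(\mu,\epsilon)$-net, $0<\rho_0\le\mu/4$, and $\mathsf P'$ a $\rho_0\epsilon$-perturbation of $\mathsf P$; set $\epsilon'=(1+\rho_0)\epsilon$, $\mu'=(\mu-2\rho_0)/(1+\rho_0)$. Let $0<\Gamma_0\le1$ and $\delta_0\ge0$ satisfy $\delta_0\le\Gamma_0^{m+1}$ and $\Gamma_0\le\frac{2\mu^2}{75}$. Suppose there is no simplex $\tau\subseteq\mathsf P'$ satisfying all of the following: (P1) $\tau$ has the $\alpha_0$-hoop property with $\alpha_0=2(16/\mu)^3\Gamma_0$; (P2) $R(\tau_p)<2\epsilon$ for all $p\in\tau$; (P3) $L(\tau)<\frac52\big(1+\frac12\delta_0\mu\big)\epsilon$; (P4) every facet of $\tau$ is $\Gamma_0$-good. Then $\mathsf P'$ contains no forbidden configuration (with parameters $\mu',\epsilon',\delta_0,\Gamma_0$), and consequently every $m$-simplex of $\mathrm{Del}_{D_{\epsilon'}}(\mathsf P')$ is $\Gamma_0$-good and $\delta$-protected, with $\delta=\delta_0\mu'\epsilon'$.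
   Context: Let $d(x,X)$ denote Euclidean distance from a point to a set; $B(c,r)$ is the open ball. For a finite $\mathsf P\subset\mathbb R^m$ and $\epsilon>0$, $\mathsf P$ is $\epsilon$-dense if $d(x,\mathsf P\cup\partial\,\mathrm{conv}(\mathsf P))<\epsilon$ for every $x\in\mathrm{conv}(\mathsf P)$; it is $\mu\epsilon$-separated if $\|p-q\|\ge\mu\epsilon$ for all distinct $p,q\in\mathsf P$. For $0<\mu\le1$, $\mathsf P$ is a $(\mu,\epsilon)$-net if it is $\epsilon$-dense and $\mu\epsilon$-separated. $D_\epsilon(\mathsf P)=\{x\in\mathrm{conv}(\mathsf P): d(x,\partial\,\mathrm{conv}(\mathsf P))\ge\epsilon\}$. A $\rho_0\epsilon$-perturbation of $\mathsf P$ is a bijection $\zeta:\mathsf P\to\mathsf P'\subset\mathbb R^m$ with $\|\zeta(p)-p\|\le\rho_0\epsilon$ for all $p$. A simplex is a nonempty finite subset $\sigma\subset\mathbb R^m$ (vertices need not be affinely independent); $\dim\sigma=|\sigma|-1$; faces are nonempty subsets; facets are faces of dimension $\dim\sigma-1$. For $p\in\sigma$, $\sigma_p=\sigma\setminus\{p\}$. $L(\sigma)$ is the largest distance between vertices. Altitude $D(p,\sigma)=d(p,\mathrm{aff}(\sigma_p))$. Thickness of a $j$-simplex: $\Upsilon(\sigma)=1$ if $j=0$, else $\min_{p}D(p,\sigma)/(jL(\sigma))$. $\sigma$ is $\Gamma_0$-good if every $j$-face $\sigma^j$ satisfies $\Upsilon(\sigma^j)\ge\Gamma_0^j$; $\Gamma_0$-bad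 otherwise; a $\Gamma_0$-flake is a $\Gamma_0$-bad simplex whose proper faces are all $\Gamma_0$-good. A circumscribing ball of $\sigma$ is an open ball whose boundary contains all vertices of $\sigma$. If one exists, the circumcentre $c(\sigma)$ and circumradius $R(\sigma)$ are the centre and radius of the smallest one (write $R(\sigma)<\infty$); otherwise $R(\sigma)=\infty$. The circumsphere is $S(\sigma)=\partial B(c(\sigma),R(\sigma))\cap\mathrm{aff}(\sigma)$. A Delaunay ball for finite $\mathsf P$ is an open ball $B(x,r)$ containing no point of $\mathsf P$ such that every open ball centred at $x$ containing no point of $\mathsf P$ is contained in $B(x,r)$. $\sigma\subseteq\mathsf P$ is Delaunay if its vertices lie on $\partial B$ for some Delaunay ball $B$. $\mathrm{Del}_{D_\epsilon}(\mathsf P)$ is the set of Delaunay simplices having a Delaunay ball centred in $D_\epsilon(\mathsf P)$. A Delaunay simplex $\sigma$ is $\delta$-protected if it has a Delaunay ball $B$ with $d(q,\partial B)>\delta$ for all $q\in\mathsf P\setminus\sigma$. Forbidden configuration: given finite $\mathsf P'\subset\mathbb R^m$ and parameters $\mu',\epsilon'>0$, $0<\Gamma_0\le1$, $\delta_0\ge0$, a $(k+1)$-simplex $\tau\subseteq\mathsf P'$ with $k\le m$ is a forbidden configuration if it is a $\Gamma_0$-flake and there exist $p\in\tau$ and a circumscribing ball $B(C,R)$ of $\tau_p$ with $R<\epsilon'$ and $\big|\,\|p-C\|-R\,\big|\le\delta_0\mu'\epsilon'$. A simplex $\tau$ has the $\alpha_0$-hoop property ($\alpha_0>0$) if for every $p\in\tau$,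 $R(\tau_p)<\infty$ and $d(p,S(\tau_p))\le\alpha_0R(\tau_p)$. *)

theory Defs
  imports "HOL-Analysis.Analysis"
begin

text \<open>Point sets live in an abstract Euclidean space 'a, of dimension m = DIM('a).\<close>

definition eps_dense :: "'a::euclidean_space set \<Rightarrow> real \<Rightarrow> bool" where
  "eps_dense P \<epsilon> \<longleftrightarrow>
     (\<forall>x \<in> convex hull P. infdist x (P \<union> frontier (convex hull P)) < \<epsilon>)"

definition separated :: "'a::euclidean_space set \<Rightarrow> real \<Rightarrow> bool" where
  "separated P s \<longleftrightarrow> (\<forall>p\<in>P. \<forall>q\<in>P. p \<noteq> q \<longrightarrow> dist p q \<ge> s)"

definition is_net :: "'a::euclidean_space set \<Rightarrow> real \<Rightarrow> real \<Rightarrow> bool" where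
  "is_net P \<mu> \<epsilon> \<longleftrightarrow> finite P \<and> 0 < \<mu> \<and> \<mu> \<le> 1 \<and> 0 < \<epsilon> \<and>
     eps_dense P \<epsilon> \<and> separated P (\<mu> * \<epsilon>)"

definition D_eps :: "'a::euclidean_space set \<Rightarrow> real \<Rightarrow> 'a set" where
  "D_eps P \<epsilon> = {x \<in> convex hull P. infdist x (frontier (convex hull P)) \<ge> \<epsilon>}"

definition is_perturbation :: "'a::euclidean_space set \<Rightarrow> 'a set \<Rightarrow> real \<Rightarrow> bool" where
  "is_perturbation P P' r \<longleftrightarrow> (\<exists>\<zeta>. bij_betw \<zeta> P P' \<and> (\<forall>p\<in>P. dist (\<zeta> p) p \<le> r))"

text \<open>Simplices: nonempty finite sets of points.\<close>

definition simplex_L :: "'a::euclidean_space set \<Rightarrow> real" where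
  "simplex_L \<sigma> = Max {dist p q | p q. p \<in> \<sigma> \<and> q \<in> \<sigma>}"

definition altitude :: "'a::euclidean_space \<Rightarrow> 'a set \<Rightarrow> real" where
  "altitude p \<sigma> = infdist p (affine hull (\<sigma> - {p}))"

definition thickness :: "'a::euclidean_space set \<Rightarrow> real" where
  "thickness \<sigma> = (if card \<sigma> = 1 then 1
     else Min ((\<lambda>p. altitude p \<sigma>) ` \<sigma>) / (real (card \<sigma> - 1) * simplex_L \<sigma>))"

definition good :: "real \<Rightarrow> 'a::euclidean_space set \<Rightarrow> bool" where
  "good \<Gamma> \<sigma> \<longleftrightarrow> (\<forall>\<tau>. \<tau> \<subseteq> \<sigma> \<and> \<tau> \<noteq> {} \<longrightarrow> thickness \<tau> \<ge> \<Gamma> ^ (card \<tau> - 1))"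

definition flake :: "real \<Rightarrow> 'a::euclidean_space set \<Rightarrow> bool" where
  "flake \<Gamma> \<sigma> \<longleftrightarrow> \<not> good \<Gamma> \<sigma> \<and> (\<forall>\<tau>. \<tau> \<subset> \<sigma> \<and> \<tau> \<noteq> {} \<longrightarrow> good \<Gamma> \<tau>)"

definition circumscribes :: "'a::euclidean_space set \<Rightarrow> 'a \<Rightarrow> real \<Rightarrow> bool" where
  "circumscribes \<sigma> c r \<longleftrightarrow> \<sigma> \<subseteq> sphere c r"

definition has_circumball :: "'a::euclidean_space set \<Rightarrow> bool" where
  "has_circumball \<sigma> \<longleftrightarrow> (\<exists>c r. circumscribes \<sigma> c r)"

definition circumradius :: "'a::euclidean_space set \<Rightarrow> real" where
  "circumradius \<sigma> = Inf {r. \<exists>c. circumscribes \<sigma> c r}"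

definition circumcentre :: "'a::euclidean_space set \<Rightarrow> 'a" where
  "circumcentre \<sigma> = (THE c. circumscribes \<sigma> c (circumradius \<sigma>))"

definition circumsphere :: "'a::euclidean_space set \<Rightarrow> 'a set" where
  "circumsphere \<sigma> = sphere (circumcentre \<sigma>) (circumradius \<sigma>) \<inter> affine hull \<sigma>"

text \<open>Hoop property. The distance to the empty set is +infinity in the paper, so we
  require the circumsphere to be nonempty (Isabelle's infdist to the empty set is 0).\<close>

definition hoop :: "real \<Rightarrow> 'a::euclidean_space set \<Rightarrow> bool" where
  "hoop \<alpha> \<tau> \<longleftrightarrow> (\<forall>p\<in>\<tau>. has_circumball (\<tau> - {p}) \<and> circumsphere (\<tau> - {p}) \<noteq> {} \<and>
      infdist p (circumsphere (\<tau> - {p})) \<le> \<alpha> * circumradius (\<tau> - {p}))"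

definition delaunay_ball :: "'a::euclidean_space set \<Rightarrow> 'a \<Rightarrow> real \<Rightarrow> bool" where
  "delaunay_ball P x r \<longleftrightarrow> ball x r \<inter> P = {} \<and>
     (\<forall>r'. ball x r' \<inter> P = {} \<longrightarrow> ball x r' \<subseteq> ball x r)"

definition Del_D :: "'a::euclidean_space set \<Rightarrow> real \<Rightarrow> 'a set set" where
  "Del_D P \<epsilon> = {\<sigma>. \<sigma> \<noteq> {} \<and> \<sigma> \<subseteq> P \<and>
     (\<exists>x r. delaunay_ball P x r \<and> \<sigma> \<subseteq> sphere x r \<and> x \<in> D_eps P \<epsilon>)}"

definition protected :: "'a::euclidean_space set \<Rightarrow> real \<Rightarrow> 'a set \<Rightarrow> bool" where
  "protected P \<delta> \<sigma> \<longleftrightarrow> (\<exists>x r. delaunay_ball P x r \<and> \<sigma> \<subseteq> sphere x r \<and>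
     (\<forall>q\<in>P - \<sigma>. infdist q (sphere x r) > \<delta>))"

text \<open>Forbidden configuration: a (k+1)-simplex with k \<le> m, i.e. 2 \<le> card \<tau> \<le> m + 2.\<close>

definition forbidden_config ::
  "'a::euclidean_space set \<Rightarrow> real \<Rightarrow> real \<Rightarrow> real \<Rightarrow> real \<Rightarrow> 'a set \<Rightarrow> bool" where
  "forbidden_config P' \<mu>' \<epsilon>' \<Gamma>\<^sub>0 \<delta>\<^sub>0 \<tau> \<longleftrightarrow>
     \<tau> \<subseteq> P' \<and> 2 \<le> card \<tau> \<and> card \<tau> \<le> DIM('a) + 2 \<and> flake \<Gamma>\<^sub>0 \<tau> \<and>
     (\<exists>p\<in>\<tau>. \<exists>C R. circumscribes (\<tau> - {p}) C R \<and> R < \<epsilon>' \<and>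
        \<bar>dist p C - R\<bar> \<le> \<delta>\<^sub>0 * \<mu>' * \<epsilon>')"

end

theory Submission
  imports Defs
begin

text \<open>A forbidden configuration is a flake \<open>\<tau>\<close> whose vertices other than \<open>p\<close> lie on a sphere of
  radius \<open>R < \<epsilon>'\<close>, with \<open>p\<close> within \<open>\<delta> = \<delta>\<^sub>0\<mu>'\<epsilon>'\<close> of it. Being a flake, \<open>\<tau>\<close> has one very short
  altitude; since its facets are good and its vertices are \<open>\<mu>'\<epsilon>'\<close>-separated, comparing altitudes
  across facets makes all altitudes \<open>O(\<Gamma>\<^sub>0\<epsilon>/\<mu>)\<close>. Each facet \<open>\<tau> - {q}\<close> then has a circumcentre
  within \<open>O(\<Gamma>\<^sub>0\<epsilon>)\<close> of the projection of the centre \<open>C\<close>, and its circumsphere passes within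
  \<open>O(\<Gamma>\<^sub>0\<epsilon>/\<mu>\<^sup>2)\<close> of \<open>q\<close>: \<open>\<tau>\<close> satisfies (P1)-(P4), which is excluded.

  Density and the perturbation bound give every Delaunay ball centred in \<open>D_eps P' \<epsilon>'\<close> a radius
  below \<open>\<epsilon>'\<close>. A bad Delaunay \<open>m\<close>-simplex would contain a flake on its Delaunay sphere, and a point
  \<open>q\<close> within \<open>\<delta>\<close> of that sphere would make the affinely dependent \<open>\<sigma> \<union> {q}\<close> contain a flake through
  \<open>q\<close>; both are forbidden configurations.\<close>

lemma dist_square_cosine_law:
  fixes a b c :: "'a::real_inner"
  shows "(dist a b)\<^sup>2 = (dist a c)\<^sup>2 - 2 * inner (a - c) (b - c) + (dist b c)\<^sup>2"
  by (simp add: dist_norm power2_norm_eq_inner inner_diff_left inner_diff_right inner_commute)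

lemma dist_square_orthogonal:
  fixes z C C' :: "'a::real_inner"
  assumes "inner (C - C') (z - C') = 0"
  shows "(dist z C)\<^sup>2 = (dist z C')\<^sup>2 + (dist C C')\<^sup>2"
  using dist_square_cosine_law[of z C C'] assms by (simp add: inner_commute)

lemma affine_nearest_point_orthogonal:
  fixes x :: "'a::euclidean_space"
  assumes A: "affine A" "closed A" "A \<noteq> {}"
  obtains y where "y \<in> A" "infdist x A = dist x y"
    "\<And>z. z \<in> A \<Longrightarrow> inner (x - y) (z - y) = 0"
proof -
  obtain y where y: "y \<in> A" "infdist x A = dist x y"
    using infdist_attains_inf[OF A(2,3)] by blast
  have "inner (x - y) (z - y) = 0" if z: "z \<in> A" for z
  proof -
    define d where "d = z - y"
    define c where "c = inner (x - y) d"
    have quadratic: "2 * t * c \<le> t\<^sup>2 * inner d d" for t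
    proof -
      have "y + t *\<^sub>R d \<in> A"
        using mem_affine_3_minus[OF A(1) y(1) z y(1)] by (simp add: d_def)
      then have "(dist x y)\<^sup>2 \<le> (dist x (y + t *\<^sub>R d))\<^sup>2"
        using infdist_le[of "y + t *\<^sub>R d" A x] y(2) by (simp add: power_mono)
      also have "\<dots> = inner ((x - y) - t *\<^sub>R d) ((x - y) - t *\<^sub>R d)"
        by (simp add: dist_norm power2_norm_eq_inner algebra_simps)
      also have "\<dots> = inner (x - y) (x - y) - 2 * t * c + t\<^sup>2 * inner d d"
        by (simp add: c_def inner_diff_left inner_diff_right inner_commute power2_eq_square
            algebra_simps)
      finally show ?thesis by (simp add: dist_norm power2_norm_eq_inner)
    qed
    show ?thesis
    proof (cases "d = 0")
      case True
      then show ?thesis by (simp add: d_def)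
    next
      case False
      then have dd: "inner d d > 0" by simp
      have "2 * (c / inner d d) * c \<le> (c / inner d d)\<^sup>2 * inner d d" by (rule quadratic)
      then have "c\<^sup>2 \<le> 0"
        using dd by (simp add: power2_eq_square field_simps)
      then show ?thesis by (simp add: c_def d_def)
    qed
  qed
  then show ?thesis using that y by blast
qed

lemma inner_const_on_affine_hull:
  fixes S :: "'a::euclidean_space set"
  assumes "\<And>v. v \<in> S \<Longrightarrow> inner (v - y) w = k" and "z \<in> affine hull S"
  shows "inner (z - y) w = k"
proof -
  have "S \<subseteq> {x. w \<bullet> x = k + inner y w}"
  proof
    fix x assume "x \<in> S"
    then have "inner x w - inner y w = k" using assms(1) by (simp add: inner_diff_left)
    then show "x \<in> {x. w \<bullet> x = k + inner y w}" by (simp add: inner_commute)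
  qed
  then have "affine hull S \<subseteq> {x. w \<bullet> x = k + inner y w}"
    by (rule hull_minimal) (rule affine_hyperplane)
  then have "w \<bullet> z = k + inner y w" using assms(2) by blast
  then show ?thesis by (simp add: inner_diff_left inner_diff_right inner_commute)
qed

text \<open>By Pythagoras, any circumscribing ball \<open>B(c, r')\<close> satisfies \<open>r'\<^sup>2 = r\<^sup>2 + |y - c|\<^sup>2\<close>.\<close>
lemma circumball_centred_in_affine_hull:
  fixes \<sigma> :: "'a::euclidean_space set"
  assumes ne: "\<sigma> \<noteq> {}" and y: "y \<in> affine hull \<sigma>" and sph: "\<sigma> \<subseteq> sphere y r"
  shows "has_circumball \<sigma>" "circumradius \<sigma> = r" "circumcentre \<sigma> = y"
proof -
  obtain v0 where v0: "v0 \<in> \<sigma>" using ne by blast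
  have r0: "r \<ge> 0" using sph v0 by (auto simp: subset_iff)
  have pythagoras: "r'\<^sup>2 = r\<^sup>2 + (dist y c)\<^sup>2 \<and> r' \<ge> 0" if "circumscribes \<sigma> c r'" for c r'
  proof -
    have sc: "\<sigma> \<subseteq> sphere c r'" using that by (simp add: circumscribes_def)
    have "inner (v - y) (c - y) = (r\<^sup>2 + (dist y c)\<^sup>2 - r'\<^sup>2) / 2" if v: "v \<in> \<sigma>" for v
      using dist_square_cosine_law[of v c y] v sc sph by (auto simp: subset_iff dist_commute)
    from inner_const_on_affine_hull[OF this y] have "r'\<^sup>2 = r\<^sup>2 + (dist y c)\<^sup>2" by simp
    moreover have "r' \<ge> 0" using sc v0 by (auto simp: subset_iff)
    ultimately show ?thesis by blast
  qed
  have cy: "circumscribes \<sigma> y r" using sph by (simp add: circumscribes_def)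
  then show "has_circumball \<sigma>" by (auto simp: has_circumball_def)
  have "Inf {r. \<exists>c. circumscribes \<sigma> c r} = r"
  proof (rule cInf_eq_minimum)
    fix r' assume "r' \<in> {r. \<exists>c. circumscribes \<sigma> c r}"
    then obtain c where "circumscribes \<sigma> c r'" by blast
    from pythagoras[OF this] have "r\<^sup>2 \<le> r'\<^sup>2" "r' \<ge> 0" by auto
    then show "r \<le> r'" by (rule power2_le_imp_le)
  qed (use cy in blast)
  then show radius: "circumradius \<sigma> = r" by (simp add: circumradius_def)
  show "circumcentre \<sigma> = y"
    unfolding circumcentre_def radius
  proof (rule the_equality)
    fix c assume "circumscribes \<sigma> c r"
    from pythagoras[OF this] show "c = y" by simp
  qed (rule cy)
qed

lemma affine_sums_with_line:
  fixes A :: "'a::real_vector set"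
  assumes "affine A"
  shows "affine {z + l *\<^sub>R d | z l. z \<in> A}"
  unfolding affine_def
proof (intro ballI allI impI)
  fix x1 x2 and u v :: real
  assume x1: "x1 \<in> {z + l *\<^sub>R d | z l. z \<in> A}" and x2: "x2 \<in> {z + l *\<^sub>R d | z l. z \<in> A}"
    and uv: "u + v = 1"
  from x1 x2 obtain z1 l1 z2 l2 where z: "z1 \<in> A" "z2 \<in> A"
    and x: "x1 = z1 + l1 *\<^sub>R d" "x2 = z2 + l2 *\<^sub>R d" by blast
  have "u *\<^sub>R z1 + v *\<^sub>R z2 \<in> A" using assms z uv unfolding affine_def by blast
  moreover have "u *\<^sub>R x1 + v *\<^sub>R x2 = (u *\<^sub>R z1 + v *\<^sub>R z2) + (u * l1 + v * l2) *\<^sub>R d"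
    unfolding x by (simp add: algebra_simps)
  ultimately show "u *\<^sub>R x1 + v *\<^sub>R x2 \<in> {z + l *\<^sub>R d | z l. z \<in> A}" by blast
qed

lemma affine_hull_insert_line:
  fixes S :: "'a::euclidean_space set"
  assumes w0: "w0 \<in> affine hull S" and y: "y \<in> affine hull (insert q S)"
  obtains z l where "z \<in> affine hull S" "y = z + l *\<^sub>R (q - w0)"
proof -
  let ?X = "{z + l *\<^sub>R (q - w0) | z l. z \<in> affine hull S}"
  have "insert q S \<subseteq> ?X"
  proof
    fix x assume x: "x \<in> insert q S"
    have "q = w0 + 1 *\<^sub>R (q - w0)" "x = x + 0 *\<^sub>R (q - w0)" by simp_all
    with x w0 hull_subset[of S affine] show "x \<in> ?X" by blast
  qed
  moreover have "affine ?X" by (rule affine_sums_with_line) simp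
  ultimately have "affine hull (insert q S) \<subseteq> ?X" by (rule hull_minimal)
  then show ?thesis using y that by blast
qed

lemma infdist_sphere_inter_affine_le:
  fixes y :: "'a::euclidean_space"
  assumes A: "affine A" and y: "y \<in> A" and q: "q \<in> A"
    and v: "v \<in> A" "dist v y = \<rho>"
  shows "infdist q (sphere y \<rho> \<inter> A) \<le> \<bar>dist q y - \<rho>\<bar>"
proof (cases "q = y")
  case True
  have "v \<in> sphere y \<rho> \<inter> A" using v by (simp add: dist_commute)
  then have "infdist q (sphere y \<rho> \<inter> A) \<le> dist q v" by (rule infdist_le)
  then show ?thesis using True v by (simp add: dist_commute)
next
  case False
  have rho0: "\<rho> \<ge> 0" using v(2) by auto
  define z where "z = y + (\<rho> / dist q y) *\<^sub>R (q - y)"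
  have dqy: "dist q y > 0" using False by simp
  have zS: "z \<in> sphere y \<rho> \<inter> A"
    using mem_affine_3_minus[OF A y q y] dqy rho0 by (simp add: z_def dist_norm)
  have "q - z = (1 - \<rho> / dist q y) *\<^sub>R (q - y)" by (simp add: z_def algebra_simps)
  then have "dist q z = \<bar>(1 - \<rho> / dist q y) * dist q y\<bar>"
    using dqy by (simp add: dist_norm abs_mult)
  also have "(1 - \<rho> / dist q y) * dist q y = dist q y - \<rho>" using dqy by (simp add: field_simps)
  finally show ?thesis using infdist_le[OF zS, of q] by simp
qed

lemma abs_dist_sphere_le_infdist:
  fixes q :: "'a::euclidean_space"
  assumes "z0 \<in> sphere x r"
  shows "\<bar>dist q x - r\<bar> \<le> infdist q (sphere x r)"
proof -
  have "sphere x r \<noteq> {}" using assms by blast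
  then obtain z where z: "z \<in> sphere x r" "infdist q (sphere x r) = dist q z"
    using infdist_attains_inf[of "sphere x r" q] by auto
  then show ?thesis using dist_triangle[of q x z] dist_triangle[of x z q]
    by (simp add: dist_commute abs_le_iff)
qed

lemma abs_diff_mult_le_abs_square_diff:
  fixes a r :: real
  assumes "a \<ge> 0" "r \<ge> 0"
  shows "\<bar>a - r\<bar> * r \<le> \<bar>a\<^sup>2 - r\<^sup>2\<bar>"
proof -
  have "a\<^sup>2 - r\<^sup>2 = (a - r) * (a + r)" by (simp add: power2_eq_square algebra_simps)
  then have "\<bar>a\<^sup>2 - r\<^sup>2\<bar> = \<bar>a - r\<bar> * (a + r)" using assms by (simp add: abs_mult)
  then show ?thesis using assms by (simp add: mult_left_mono)
qed

lemma abs_square_diff_le: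
  fixes a r :: real
  assumes "\<bar>a - r\<bar> \<le> \<delta>" "0 \<le> a" "0 \<le> r"
  shows "\<bar>a\<^sup>2 - r\<^sup>2\<bar> \<le> \<delta> * (2 * r + \<delta>)"
proof -
  have "a\<^sup>2 - r\<^sup>2 = (a - r) * (a + r)" by (simp add: power2_eq_square algebra_simps)
  then have "\<bar>a\<^sup>2 - r\<^sup>2\<bar> = \<bar>a - r\<bar> * (a + r)" using assms by (simp add: abs_mult)
  also have "\<dots> \<le> \<delta> * (2 * r + \<delta>)" using assms by (intro mult_mono) (auto simp: abs_le_iff)
  finally show ?thesis .
qed

lemma two_distinct_elements:
  assumes "finite X" "card X \<ge> 2"
  obtains u w where "u \<in> X" "w \<in> X" "u \<noteq> w"
  using assms by (metis card_le_Suc0_iff_eq not_less_eq_eq numeral_2_eq_2)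

lemma finite_pairwise_dists:
  assumes "finite \<sigma>"
  shows "finite {dist p q | p q. p \<in> \<sigma> \<and> q \<in> \<sigma>}"
proof -
  have "{dist p q | p q. p \<in> \<sigma> \<and> q \<in> \<sigma>} = (\<lambda>(p, q). dist p q) ` (\<sigma> \<times> \<sigma>)" by auto
  then show ?thesis using assms by simp
qed

lemma dist_le_simplex_L:
  assumes "finite \<sigma>" "u \<in> \<sigma>" "w \<in> \<sigma>"
  shows "dist u w \<le> simplex_L \<sigma>"
  unfolding simplex_L_def using assms by (intro Max_ge finite_pairwise_dists) blast+

lemma simplex_L_le:
  assumes "finite \<sigma>" "\<sigma> \<noteq> {}" "\<And>u w. u \<in> \<sigma> \<Longrightarrow> w \<in> \<sigma> \<Longrightarrow> dist u w \<le> B"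
  shows "simplex_L \<sigma> \<le> B"
proof -
  have "{dist p q | p q. p \<in> \<sigma> \<and> q \<in> \<sigma>} \<noteq> {}" using assms(2) by blast
  then show ?thesis unfolding simplex_L_def using assms(3)
    by (subst Max_le_iff[OF finite_pairwise_dists[OF assms(1)]]) blast+
qed

lemma simplex_L_nonneg:
  assumes "finite \<sigma>" "u \<in> \<sigma>"
  shows "0 \<le> simplex_L \<sigma>"
  using dist_le_simplex_L[OF assms assms(2)] by simp

lemma simplex_L_pos:
  assumes "finite \<sigma>" "card \<sigma> \<ge> 2"
  shows "0 < simplex_L \<sigma>"
proof -
  obtain u w where "u \<in> \<sigma>" "w \<in> \<sigma>" "u \<noteq> w" using two_distinct_elements assms by blast
  then show ?thesis using dist_le_simplex_L[OF assms(1)] by (metis order_less_le_trans zero_less_dist_iff)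
qed

lemma separated_le_simplex_L:
  assumes "finite \<sigma>" "card \<sigma> \<ge> 2" "separated \<sigma> s"
  shows "s \<le> simplex_L \<sigma>"
proof -
  obtain u w where "u \<in> \<sigma>" "w \<in> \<sigma>" "u \<noteq> w" using two_distinct_elements assms by blast
  then show ?thesis
    using assms(3) dist_le_simplex_L[OF assms(1)] unfolding separated_def by (meson order_trans)
qed

lemma separated_on_sphere_le:
  assumes "finite X" "card X \<ge> 2" "separated X s" "X \<subseteq> sphere y \<rho>"
  shows "s \<le> 2 * \<rho>"
proof -
  obtain u w where uw: "u \<in> X" "w \<in> X" "u \<noteq> w" using two_distinct_elements assms by blast
  then have "s \<le> dist u w" using assms(3) by (auto simp: separated_def)
  also have "\<dots> \<le> dist y u + dist y w" by (metis dist_commute dist_triangle)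
  also have "\<dots> = 2 * \<rho>"
  proof -
    have "u \<in> sphere y \<rho>" "w \<in> sphere y \<rho>" using uw(1,2) assms(4) by auto
    then show ?thesis by simp
  qed
  finally show ?thesis .
qed

lemma simplex_L_le_near_sphere:
  assumes "finite \<tau>" "p \<in> \<tau>" "\<tau> - {p} \<subseteq> sphere C R" "\<bar>dist p C - R\<bar> \<le> \<delta>"
    "0 \<le> \<delta>" "0 \<le> R"
  shows "simplex_L \<tau> \<le> 2 * R + \<delta>"
proof (rule simplex_L_le)
  have near: "dist u C \<le> R + (if u = p then \<delta> else 0)" if "u \<in> \<tau>" for u
    using that assms(3,4) by (auto simp: subset_iff dist_commute)
  fix u w assume u: "u \<in> \<tau>" and w: "w \<in> \<tau>"
  show "dist u w \<le> 2 * R + \<delta>"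
  proof (cases "u = w")
    case True
    then show ?thesis using assms(5,6) by simp
  next
    case False
    then show ?thesis
      using dist_triangle2[of u w C] near[OF u] near[OF w] assms(5) by (auto split: if_splits)
  qed
qed (use assms in auto)

lemma altitude_nonneg: "0 \<le> altitude p \<sigma>"
  by (simp add: altitude_def infdist_nonneg)

lemma thickness_eq:
  "finite \<sigma> \<Longrightarrow> card \<sigma> \<ge> 2 \<Longrightarrow>
    thickness \<sigma> = Min ((\<lambda>p. altitude p \<sigma>) ` \<sigma>) / (real (card \<sigma> - 1) * simplex_L \<sigma>)"
  by (simp add: thickness_def)

lemma good_altitude_ge:
  assumes fin: "finite \<sigma>" and c: "card \<sigma> \<ge> 2" and g: "good G \<sigma>" and v: "v \<in> \<sigma>"
  shows "G ^ (card \<sigma> - 1) * real (card \<sigma> - 1) * simplex_L \<sigma> \<le> altitude v \<sigma>"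
proof -
  have pos: "0 < real (card \<sigma> - 1) * simplex_L \<sigma>" using simplex_L_pos[OF fin c] c by simp
  have "G ^ (card \<sigma> - 1) \<le> thickness \<sigma>" using g v unfolding good_def by blast
  then have "G ^ (card \<sigma> - 1) * (real (card \<sigma> - 1) * simplex_L \<sigma>) \<le> Min ((\<lambda>p. altitude p \<sigma>) ` \<sigma>)"
    unfolding thickness_eq[OF fin c] pos_le_divide_eq[OF pos] .
  also have "\<dots> \<le> altitude v \<sigma>" using fin v by simp
  finally show ?thesis by (simp add: mult.assoc)
qed

lemma thickness_lt_obtains_altitude:
  assumes fin: "finite \<sigma>" and c: "card \<sigma> \<ge> 2" and th: "thickness \<sigma> < G ^ (card \<sigma> - 1)"
  obtains a where "a \<in> \<sigma>"
    "altitude a \<sigma> < G ^ (card \<sigma> - 1) * real (card \<sigma> - 1) * simplex_L \<sigma>"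
proof -
  have pos: "0 < real (card \<sigma> - 1) * simplex_L \<sigma>" using simplex_L_pos[OF fin c] c by simp
  have "Min ((\<lambda>p. altitude p \<sigma>) ` \<sigma>) < G ^ (card \<sigma> - 1) * (real (card \<sigma> - 1) * simplex_L \<sigma>)"
    using th unfolding thickness_eq[OF fin c] pos_divide_less_eq[OF pos] .
  moreover have "Min ((\<lambda>p. altitude p \<sigma>) ` \<sigma>) \<in> (\<lambda>p. altitude p \<sigma>) ` \<sigma>"
    using fin c by (intro Min_in) auto
  ultimately show ?thesis using that by (auto simp: mult.assoc)
qed

lemma good_subset: "good G \<sigma> \<Longrightarrow> \<tau> \<subseteq> \<sigma> \<Longrightarrow> good G \<tau>"
  unfolding good_def by blast

lemma good_if_card_le_2:
  fixes \<sigma> :: "'a::euclidean_space set"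
  assumes "finite \<sigma>" "card \<sigma> \<le> 2" "0 < G" "G \<le> 1"
  shows "good G \<sigma>"
  unfolding good_def
proof (intro allI impI)
  fix \<tau> assume \<tau>: "\<tau> \<subseteq> \<sigma> \<and> \<tau> \<noteq> {}"
  then have fin: "finite \<tau>" using assms(1) finite_subset by blast
  have "card \<tau> \<le> 2" using \<tau> assms(2) card_mono[OF assms(1)] by (meson order_trans)
  moreover have "card \<tau> \<ge> 1" using fin \<tau> by (simp add: Suc_le_eq card_gt_0_iff)
  ultimately consider "card \<tau> = 1" | "card \<tau> = 2" by linarith
  then show "G ^ (card \<tau> - 1) \<le> thickness \<tau>"
  proof cases
    case 1
    then show ?thesis by (simp add: thickness_def)
  next
    case 2
    then obtain u w where uw: "\<tau> = {u, w}" "u \<noteq> w" by (meson card_2_iff)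
    have "simplex_L \<tau> = dist u w"
      by (rule antisym, rule simplex_L_le) (auto simp: uw dist_commute intro: dist_le_simplex_L)
    moreover have "altitude u \<tau> = dist u w" "altitude w \<tau> = dist u w"
      using uw by (auto simp: altitude_def insert_Diff_if dist_commute)
    ultimately have "thickness \<tau> = 1" using 2 uw by (simp add: thickness_def)
    then show ?thesis using 2 assms by simp
  qed
qed

lemma flake_card_ge_3:
  fixes \<tau> :: "'a::euclidean_space set"
  assumes "finite \<tau>" "flake G \<tau>" "0 < G" "G \<le> 1"
  shows "card \<tau> \<ge> 3"
  using good_if_card_le_2[OF assms(1) _ assms(3,4)] assms(2) unfolding flake_def by fastforce

lemma exists_flake_subset:
  fixes X :: "'a::euclidean_space set"
  assumes "finite X" "\<not> good G X"
  obtains \<tau> where "\<tau> \<subseteq> X" "flake G \<tau>"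
  using assms
proof (induction "card X" arbitrary: X rule: less_induct)
  case less
  show ?case
  proof (cases "flake G X")
    case True
    then show ?thesis using less.prems(1) by blast
  next
    case False
    then obtain Z where Z: "Z \<subset> X" "\<not> good G Z"
      using less.prems(3) unfolding flake_def by blast
    have "card Z < card X" using Z(1) less.prems(2) by (simp add: psubset_card_mono)
    from less.hyps[OF this] Z less.prems(1,2) show ?thesis
      using finite_subset[of Z X] by (meson order.trans psubset_imp_subset)
  qed
qed

lemma flake_thickness_lt:
  assumes "flake G \<tau>"
  shows "thickness \<tau> < G ^ (card \<tau> - 1)"
proof -
  from assms obtain \<sigma> where \<sigma>: "\<sigma> \<subseteq> \<tau>" "\<sigma> \<noteq> {}" "\<not> G ^ (card \<sigma> - 1) \<le> thickness \<sigma>"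
    unfolding flake_def good_def by blast
  then have "\<sigma> = \<tau>" using assms unfolding flake_def good_def by blast
  then show ?thesis using \<sigma> by simp
qed

lemma flake_facet_good:
  assumes "flake G \<tau>" "q \<in> \<tau>" "\<tau> - {q} \<noteq> {}"
  shows "good G (\<tau> - {q})"
  using assms unfolding flake_def by blast

text \<open>An affinely dependent simplex has a vertex of altitude zero.\<close>
lemma affine_dependent_not_good:
  fixes X :: "'a::euclidean_space set"
  assumes fin: "finite X" and dep: "affine_dependent X" and G0: "0 < G"
  shows "\<not> good G X"
proof
  assume g: "good G X"
  obtain v where v: "v \<in> X" "v \<in> affine hull (X - {v})"
    using dep unfolding affine_dependent_def by blast
  then have "X - {v} \<noteq> {}" by (metis affine_hull_empty empty_iff)
  then obtain w where "w \<in> X" "w \<noteq> v" by blast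
  then have c: "card X \<ge> 2"
    using card_mono[OF fin, of "{v, w}"] v(1) by simp
  have "G ^ (card X - 1) * real (card X - 1) * simplex_L X \<le> altitude v X"
    by (rule good_altitude_ge[OF fin c g v(1)])
  moreover have "altitude v X = 0" using v by (simp add: altitude_def)
  moreover have "0 < G ^ (card X - 1) * real (card X - 1) * simplex_L X"
    using G0 c simplex_L_pos[OF fin c] by simp
  ultimately show False by linarith
qed

text \<open>Write the foot of the altitude from \<open>a\<close> as \<open>z + l (q - w\<^sub>0)\<close> with \<open>z\<close> in the affine hull of
  \<open>\<tau> - {a, q}\<close>. Then \<open>D(a, \<tau> - q) \<le> D(a, \<tau>) + |l| L(\<tau>)\<close>, while \<open>w\<^sub>0 + (a - z)/l\<close> lies in the
  affine hull of \<open>\<tau> - {q}\<close> at distance \<open>D(a, \<tau>)/|l|\<close> from \<open>q\<close>.\<close>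
lemma altitude_facet_gap:
  fixes \<tau> :: "'a::euclidean_space set"
  assumes fin: "finite \<tau>" and a: "a \<in> \<tau>" and q: "q \<in> \<tau>" and aq: "a \<noteq> q"
    and ne: "\<tau> - {a, q} \<noteq> {}"
  shows "altitude q \<tau> * (altitude a (\<tau> - {q}) - altitude a \<tau>) \<le> altitude a \<tau> * simplex_L \<tau>"
proof -
  define S where "S = \<tau> - {a, q}"
  define A where "A = affine hull S"
  obtain w0 where w0: "w0 \<in> S" using ne S_def by blast
  have w0A: "w0 \<in> A" using w0 hull_subset[of S affine] A_def by blast
  have ta: "\<tau> - {a} = insert q S" and tq: "\<tau> - {q} = insert a S"
    using a q aq S_def by auto
  have "affine hull (\<tau> - {a}) \<noteq> {}" using q aq by auto
  then obtain a' where a': "a' \<in> affine hull (\<tau> - {a})" "altitude a \<tau> = dist a a'"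
    using infdist_attains_inf[OF closed_affine_hull] unfolding altitude_def by blast
  obtain z l where zl: "z \<in> A" "a' = z + l *\<^sub>R (q - w0)"
    using affine_hull_insert_line[OF w0A[unfolded A_def], of a' q] a'(1) ta A_def by auto
  have altaq: "altitude a (\<tau> - {q}) = infdist a A"
    using S_def A_def by (simp add: altitude_def Diff_insert2[symmetric] insert_commute)
  have "infdist a' A \<le> \<bar>l\<bar> * simplex_L \<tau>"
  proof -
    have "infdist a' A \<le> dist a' z" by (rule infdist_le[OF zl(1)])
    also have "\<dots> = \<bar>l\<bar> * dist q w0" using zl(2) by (simp add: dist_norm)
    also have "\<dots> \<le> \<bar>l\<bar> * simplex_L \<tau>"
      using dist_le_simplex_L[OF fin q, of w0] w0 S_def by (simp add: mult_left_mono)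
    finally show ?thesis .
  qed
  then have gap: "altitude a (\<tau> - {q}) - altitude a \<tau> \<le> \<bar>l\<bar> * simplex_L \<tau>"
    using infdist_triangle[of a A a'] altaq a'(2) by simp
  have L0: "0 \<le> simplex_L \<tau>" by (rule simplex_L_nonneg[OF fin q])
  show ?thesis
  proof (cases "l = 0")
    case True
    then show ?thesis
      using gap L0 by (simp add: mult_nonneg_nonpos altitude_nonneg order_trans[OF _ mult_nonneg_nonneg])
  next
    case False
    define q'' where "q'' = w0 + (1 / l) *\<^sub>R (a - z)"
    have "affine hull S \<subseteq> affine hull (\<tau> - {q})" by (rule hull_mono) (auto simp: tq)
    moreover have "a \<in> affine hull (\<tau> - {q})" using tq hull_subset[of "\<tau> - {q}" affine] by auto
    ultimately have "q'' \<in> affine hull (\<tau> - {q})"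
      unfolding q''_def using w0A zl(1) A_def by (intro mem_affine_3_minus) auto
    then have "altitude q \<tau> \<le> dist q q''" by (simp add: altitude_def infdist_le)
    also have "q - q'' = (1 / l) *\<^sub>R (a' - a)"
      using False by (simp add: q''_def zl(2) algebra_simps)
    then have "dist q q'' = dist a a' / \<bar>l\<bar>" by (simp add: dist_norm norm_minus_commute)
    finally have "altitude q \<tau> * \<bar>l\<bar> \<le> altitude a \<tau>"
      using False a'(2) by (simp add: pos_le_divide_eq)
    then have "altitude q \<tau> * (\<bar>l\<bar> * simplex_L \<tau>) \<le> altitude a \<tau> * simplex_L \<tau>"
      using L0 by (metis mult.assoc mult_right_mono)
    moreover have "altitude q \<tau> * (altitude a (\<tau> - {q}) - altitude a \<tau>) \<le> altitude q \<tau> * (\<bar>l\<bar> * simplex_L \<tau>)"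
      by (rule mult_left_mono[OF gap altitude_nonneg])
    ultimately show ?thesis by linarith
  qed
qed

lemma power_mult_le_one:
  fixes G :: real
  assumes "0 \<le> G" "G \<le> 1 / 2"
  shows "G ^ k * real k \<le> 1"
proof -
  have "G ^ k * real k \<le> (1 / 2) ^ k * 2 ^ k"
    using assms of_nat_less_two_power[of k, where 'a=real]
    by (intro mult_mono power_mono) auto
  also have "\<dots> = 1" by (simp add: power_mult_distrib[symmetric])
  finally show ?thesis .
qed

lemma flake_facet_altitude_ge:
  fixes \<tau> :: "'a::euclidean_space set"
  assumes fin: "finite \<tau>" and fl: "flake G \<tau>" and G: "0 < G" "G \<le> 1" and sep: "separated \<tau> s"
    and q: "q \<in> \<tau>" and v: "v \<in> \<tau> - {q}"
  shows "G ^ (card \<tau> - 2) * real (card \<tau> - 2) * s \<le> altitude v (\<tau> - {q})"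
proof -
  have n3: "card \<tau> \<ge> 3" by (rule flake_card_ge_3[OF fin fl G])
  have fq: "finite (\<tau> - {q})" and cq: "card (\<tau> - {q}) = card \<tau> - 1"
    using fin q by (simp_all add: card_Diff_singleton)
  then have cq2: "card (\<tau> - {q}) \<ge> 2" using n3 by simp
  have "s \<le> simplex_L (\<tau> - {q})"
    by (rule separated_le_simplex_L[OF fq cq2]) (use sep in \<open>auto simp: separated_def\<close>)
  moreover have "card \<tau> - 2 = card (\<tau> - {q}) - 1" using cq by simp
  ultimately have "G ^ (card \<tau> - 2) * real (card \<tau> - 2) * s
      \<le> G ^ (card (\<tau> - {q}) - 1) * real (card (\<tau> - {q}) - 1) * simplex_L (\<tau> - {q})"
    using G by (metis mult_left_mono mult_nonneg_nonneg of_nat_0_le_iff zero_le_power less_imp_le)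
  also have "\<dots> \<le> altitude v (\<tau> - {q})"
    using good_altitude_ge[OF fq cq2 _ v] flake_facet_good[OF fl q] v by blast
  finally show ?thesis .
qed

lemma flake_obtains_short_altitude:
  fixes \<tau> :: "'a::euclidean_space set"
  assumes fin: "finite \<tau>" and fl: "flake G \<tau>" and G: "0 < G" "G \<le> 1"
  obtains a where "a \<in> \<tau>"
    "altitude a \<tau> \<le> 2 * G * (G ^ (card \<tau> - 2) * real (card \<tau> - 2)) * simplex_L \<tau>"
proof -
  define n where "n = card \<tau>"
  have n3: "n \<ge> 3" unfolding n_def by (rule flake_card_ge_3[OF fin fl G])
  then have "card \<tau> \<ge> 2" by (simp add: n_def)
  then obtain a where a: "a \<in> \<tau>" "altitude a \<tau> < G ^ (n - 1) * real (n - 1) * simplex_L \<tau>"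
    using thickness_lt_obtains_altitude[OF fin _ flake_thickness_lt[OF fl]] unfolding n_def by blast
  have "n - 1 = Suc (n - 2)" using n3 by simp
  then have "G ^ (n - 1) = G * G ^ (n - 2)" by simp
  moreover have "real (n - 1) \<le> 2 * real (n - 2)" using n3 by linarith
  then have "G * G ^ (n - 2) * real (n - 1) \<le> G * G ^ (n - 2) * (2 * real (n - 2))"
    using G by (intro mult_left_mono) auto
  ultimately have "G ^ (n - 1) * real (n - 1) \<le> 2 * G * (G ^ (n - 2) * real (n - 2))"
    by (simp add: mult.assoc mult.left_commute)
  then have "G ^ (n - 1) * real (n - 1) * simplex_L \<tau> \<le> 2 * G * (G ^ (n - 2) * real (n - 2)) * simplex_L \<tau>"
    using simplex_L_nonneg[OF fin a(1)] by (rule mult_right_mono)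
  then show ?thesis using that a unfolding n_def by fastforce
qed

text \<open>A flake has one short altitude; since its facets are good and its edges are at least \<open>s\<close>
  long, the gap estimate of \<open>altitude_facet_gap\<close> makes every other altitude short as well.\<close>
lemma flake_altitude_bound:
  fixes \<tau> :: "'a::euclidean_space set"
  assumes fin: "finite \<tau>" and fl: "flake G \<tau>" and G: "0 < G" "G \<le> 1 / 2" and sep: "separated \<tau> s"
    and q: "q \<in> \<tau>"
  shows "altitude q \<tau> * (s - 2 * G * simplex_L \<tau>) \<le> 2 * G * (simplex_L \<tau>)\<^sup>2"
proof -
  define n where "n = card \<tau>"
  define L where "L = simplex_L \<tau>"
  define g where "g = G ^ (n - 2) * real (n - 2)"
  have n3: "n \<ge> 3" unfolding n_def by (rule flake_card_ge_3[OF fin fl]) (use G in auto)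
  have g0: "0 < g" using G n3 by (simp add: g_def)
  have g1: "g \<le> 1" unfolding g_def by (rule power_mult_le_one) (use G in auto)
  have L0: "0 \<le> L" using simplex_L_nonneg[OF fin q] by (simp add: L_def)
  have sL: "s \<le> L"
    unfolding L_def by (rule separated_le_simplex_L[OF fin _ sep]) (use n3 n_def in simp)
  obtain a where a: "a \<in> \<tau>" and alta: "altitude a \<tau> \<le> 2 * G * g * L"
    using flake_obtains_short_altitude[OF fin fl] G unfolding n_def g_def L_def by auto
  show ?thesis
  proof (cases "s - 2 * G * L \<le> 0")
    case True
    then have "altitude q \<tau> * (s - 2 * G * L) \<le> 0" by (simp add: mult_nonneg_nonpos altitude_nonneg)
    also have "0 \<le> 2 * G * L\<^sup>2" using G by simp
    finally show ?thesis by (simp add: L_def)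
  next
    case False
    show ?thesis
    proof (cases "q = a")
      case True
      have "2 * G * g * L \<le> 2 * G * 1 * L" using g1 G L0 by (intro mult_right_mono mult_left_mono) auto
      then have "altitude q \<tau> \<le> 2 * G * L" using alta True by simp
      moreover have "0 \<le> 2 * G * L" using G L0 by simp
      ultimately have "altitude q \<tau> * (s - 2 * G * L) \<le> (2 * G * L) * L"
        using False sL by (intro mult_mono) auto
      then show ?thesis by (simp add: L_def power2_eq_square mult.assoc)
    next
      case qa: False
      have "\<tau> - {a, q} \<noteq> {}"
      proof
        assume "\<tau> - {a, q} = {}"
        then have "card \<tau> \<le> card {a, q}" by (simp add: card_mono)
        also have "\<dots> \<le> 2" by (simp add: card_insert_le_m1)
        finally show False using n3 n_def by simp
      qed
      then have "altitude q \<tau> * (altitude a (\<tau> - {q}) - altitude a \<tau>) \<le> altitude a \<tau> * L"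
        using altitude_facet_gap[OF fin a(1) q] qa by (simp add: L_def)
      moreover have "g * s - 2 * G * g * L \<le> altitude a (\<tau> - {q}) - altitude a \<tau>"
        using flake_facet_altitude_ge[OF fin fl _ _ sep q, of a] a(1) qa alta G
        unfolding n_def g_def by simp
      moreover have "g * (s - 2 * G * L) = g * s - 2 * G * g * L" by (simp add: algebra_simps)
      ultimately have "altitude q \<tau> * (g * (s - 2 * G * L)) \<le> altitude a \<tau> * L"
        using mult_left_mono[OF _ altitude_nonneg[of q \<tau>]] by (metis order_trans)
      also have "\<dots> \<le> (2 * G * g * L) * L" using alta L0 by (rule mult_right_mono)
      finally have "g * (altitude q \<tau> * (s - 2 * G * L)) \<le> g * (2 * G * L\<^sup>2)"
        by (simp add: power2_eq_square ac_simps)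
      then show ?thesis using g0 by (simp add: L_def)
    qed
  qed
qed

text \<open>Moving \<open>c\<close> along the normal \<open>\<nu>\<close> from the affine hull of \<open>F\<close> to \<open>p\<close> keeps \<open>F\<close> equidistant, and
  changes \<open>dist(p, \<cdot>)\<^sup>2 - dist(v, \<cdot>)\<^sup>2\<close> at the rate \<open>-2 |\<nu>|\<^sup>2\<close>.\<close>
lemma equidistant_centre_shift:
  fixes F :: "'a::euclidean_space set"
  assumes c: "c \<in> affine hull (insert p F)" and v: "v \<in> F"
    and equi: "\<And>w. w \<in> F \<Longrightarrow> dist w c = dist v c"
    and alt: "0 < infdist p (affine hull F)"
  obtains y where "y \<in> affine hull (insert p F)" "\<And>w. w \<in> insert p F \<Longrightarrow> dist w y = dist v y"
    "dist y c = \<bar>(dist p c)\<^sup>2 - (dist v c)\<^sup>2\<bar> / (2 * infdist p (affine hull F))"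
proof -
  have "affine hull F \<noteq> {}" using v by auto
  then obtain \<pi> where \<pi>: "\<pi> \<in> affine hull F" "infdist p (affine hull F) = dist p \<pi>"
    "\<And>z. z \<in> affine hull F \<Longrightarrow> inner (p - \<pi>) (z - \<pi>) = 0"
    using affine_nearest_point_orthogonal[OF affine_affine_hull closed_affine_hull] by blast
  define \<nu> where "\<nu> = p - \<pi>"
  have nu_pos: "0 < norm \<nu>" using \<pi>(2) alt by (simp add: \<nu>_def dist_norm)
  define t where "t = ((dist p c)\<^sup>2 - (dist v c)\<^sup>2) / (2 * (norm \<nu>)\<^sup>2)"
  define y where "y = c + t *\<^sub>R \<nu>"
  have "p \<in> affine hull (insert p F)" "\<pi> \<in> affine hull (insert p F)"
    using \<pi>(1) hull_mono[of F "insert p F"] hull_subset[of "insert p F" affine] by auto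
  then have yA: "y \<in> affine hull (insert p F)" unfolding y_def \<nu>_def
    by (intro mem_affine_3_minus affine_affine_hull c)
  define \<beta> where "\<beta> = inner (\<pi> - c) \<nu>"
  have y_dist: "(dist w y)\<^sup>2 = (dist w c)\<^sup>2 - 2 * t * inner (w - c) \<nu> + t\<^sup>2 * (norm \<nu>)\<^sup>2" for w
    using dist_square_cosine_law[of w y c]
    by (simp add: y_def dist_norm power_mult_distrib power2_eq_square)
  have face: "inner (w - c) \<nu> = \<beta>" if "w \<in> F" for w
  proof -
    have "w \<in> affine hull F" using that hull_subset[of F affine] by blast
    then have "inner (w - \<pi>) \<nu> = 0" using \<pi>(3) unfolding \<nu>_def by (metis inner_commute)
    moreover have "inner (w - c) \<nu> = inner (w - \<pi>) \<nu> + \<beta>" by (simp add: \<beta>_def inner_diff_left)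
    ultimately show ?thesis by simp
  qed
  have "inner (p - c) \<nu> = (norm \<nu>)\<^sup>2 + \<beta>"
    by (simp add: \<beta>_def \<nu>_def inner_diff_left power2_norm_eq_inner)
  then have "(dist p y)\<^sup>2 = (dist p c)\<^sup>2 - 2 * t * (norm \<nu>)\<^sup>2 - 2 * t * \<beta> + t\<^sup>2 * (norm \<nu>)\<^sup>2"
    using y_dist[of p] by (simp add: algebra_simps)
  moreover have "(dist v y)\<^sup>2 = (dist v c)\<^sup>2 - 2 * t * \<beta> + t\<^sup>2 * (norm \<nu>)\<^sup>2"
    using y_dist[of v] face[OF v] by simp
  moreover have "2 * t * (norm \<nu>)\<^sup>2 = (dist p c)\<^sup>2 - (dist v c)\<^sup>2"
    using nu_pos by (simp add: t_def)
  ultimately have "(dist p y)\<^sup>2 = (dist v y)\<^sup>2" by linarith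
  moreover have "(dist w y)\<^sup>2 = (dist v y)\<^sup>2" if "w \<in> F" for w
    using y_dist[of w] y_dist[of v] face[OF that] face[OF v] equi[OF that] by simp
  ultimately have "dist w y = dist v y" if "w \<in> insert p F" for w
    using that by (cases "w = p") (auto simp: power2_eq_iff_nonneg)
  moreover have "dist y c = \<bar>(dist p c)\<^sup>2 - (dist v c)\<^sup>2\<bar> / (2 * infdist p (affine hull F))"
    using nu_pos \<pi>(2) by (simp add: y_def t_def \<nu>_def dist_norm abs_divide power2_eq_square)
  ultimately show ?thesis using that yA by blast
qed

lemma near_cospherical_facet_centre:
  fixes \<tau> :: "'a::euclidean_space set"
  assumes p: "p \<in> \<tau>" and v0: "v0 \<in> \<tau> - {p, q}"
    and sph: "\<tau> - {p} \<subseteq> sphere C R" and T0: "0 \<le> T"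
    and C': "C' \<in> affine hull (\<tau> - {q})"
      "\<And>z. z \<in> affine hull (\<tau> - {q}) \<Longrightarrow> inner (C - C') (z - C') = 0"
    and Tq: "q \<noteq> p \<Longrightarrow> \<bar>(dist p C)\<^sup>2 - R\<^sup>2\<bar> \<le> 2 * T * altitude p (\<tau> - {q})"
    and Dp: "q \<noteq> p \<Longrightarrow> 0 < altitude p (\<tau> - {q})"
  obtains y where "y \<in> affine hull (\<tau> - {q})" "\<And>w. w \<in> \<tau> - {q} \<Longrightarrow> dist w y = dist v0 y"
    "dist y C' \<le> T"
proof -
  have pyth: "(dist z C)\<^sup>2 = (dist z C')\<^sup>2 + (dist C C')\<^sup>2" if "z \<in> \<tau> - {q}" for z
    using C'(2) that hull_subset[of "\<tau> - {q}" affine] by (intro dist_square_orthogonal) blast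
  have equi: "dist w C' = dist v0 C'" if "w \<in> \<tau> - {q} - {p}" for w
  proof -
    have "w \<in> sphere C R" "v0 \<in> sphere C R" using that v0 sph by auto
    then have "dist w C = dist v0 C" by (metis dist_commute mem_sphere)
    then have "(dist w C')\<^sup>2 = (dist v0 C')\<^sup>2" using pyth[of w] pyth[of v0] that v0 by simp
    then show ?thesis by (simp add: power2_eq_iff_nonneg)
  qed
  show ?thesis
  proof (cases "q = p")
    case True
    then show ?thesis using that[of C'] C'(1) T0 equi by simp
  next
    case False
    then have facet: "insert p (\<tau> - {q} - {p}) = \<tau> - {q}" using p by auto
    have "v0 \<in> \<tau> - {q} - {p}" using v0 by blast
    moreover have "0 < infdist p (affine hull (\<tau> - {q} - {p}))"
      using Dp[OF False] by (simp add: altitude_def)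
    ultimately obtain y where y: "y \<in> affine hull (\<tau> - {q})"
      "\<And>w. w \<in> \<tau> - {q} \<Longrightarrow> dist w y = dist v0 y"
      "dist y C' = \<bar>(dist p C')\<^sup>2 - (dist v0 C')\<^sup>2\<bar> / (2 * altitude p (\<tau> - {q}))"
      using equidistant_centre_shift[of C' p "\<tau> - {q} - {p}" v0] C'(1) equi
      unfolding facet by (metis altitude_def)
    have "(dist p C')\<^sup>2 - (dist v0 C')\<^sup>2 = (dist p C)\<^sup>2 - R\<^sup>2"
      using pyth[of p] pyth[of v0] p False v0 sph by (auto simp: subset_iff dist_commute)
    then have "dist y C' = \<bar>(dist p C)\<^sup>2 - R\<^sup>2\<bar> / (2 * altitude p (\<tau> - {q}))" using y(3) by simp
    also have "\<dots> \<le> T" using Tq[OF False] Dp[OF False] by (simp add: divide_le_eq mult.commute)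
    finally show ?thesis using that y(1,2) by blast
  qed
qed

lemma infdist_sphere_inter_affine_mult_le:
  fixes q :: "'a::euclidean_space"
  assumes A: "affine A" and q': "q' \<in> A" and y: "y \<in> A" and v: "v \<in> A" "dist v y = \<rho>"
  shows "infdist q (sphere y \<rho> \<inter> A) * \<rho> \<le> dist q q' * \<rho> + \<bar>(dist q' y)\<^sup>2 - \<rho>\<^sup>2\<bar>"
proof -
  have \<rho>: "0 \<le> \<rho>" using v(2) by auto
  have "infdist q (sphere y \<rho> \<inter> A) \<le> \<bar>dist q' y - \<rho>\<bar> + dist q q'"
    using infdist_triangle[of q "sphere y \<rho> \<inter> A" q'] infdist_sphere_inter_affine_le[OF A y q' v]
    by linarith
  then have "infdist q (sphere y \<rho> \<inter> A) * \<rho> \<le> \<bar>dist q' y - \<rho>\<bar> * \<rho> + dist q q' * \<rho>"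
    using \<rho> by (metis distrib_right mult_right_mono)
  then show ?thesis using abs_diff_mult_le_abs_square_diff[OF zero_le_dist \<rho>, of q' y] by linarith
qed

text \<open>\<open>C'\<close> and \<open>q'\<close> are the projections of \<open>C\<close> and \<open>q\<close> to \<open>A\<close>: a sphere in \<open>A\<close> through a point of
  \<open>sphere C R\<close> and centred near \<open>C'\<close> passes near any \<open>q\<close> that is near both \<open>A\<close> and \<open>sphere C R\<close>.\<close>
lemma infdist_sphere_near_projected_centre:
  fixes q :: "'a::euclidean_space"
  assumes A: "affine A"
    and C': "C' \<in> A" "\<And>z. z \<in> A \<Longrightarrow> inner (C - C') (z - C') = 0"
    and q': "q' \<in> A" "\<And>z. z \<in> A \<Longrightarrow> inner (q - q') (z - q') = 0"
    and y: "y \<in> A" "dist y C' \<le> T"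
    and v: "v \<in> A" "dist v C = R" "dist v y = \<rho>" "dist q v \<le> L"
  shows "infdist q (sphere y \<rho> \<inter> A) * \<rho>
    \<le> dist q q' * \<rho> + \<bar>(dist q C)\<^sup>2 - R\<^sup>2\<bar> + (dist q q')\<^sup>2 + 2 * dist q q' * R + 2 * L * T"
proof -
  define D where "D = dist q q'"
  define h where "h = dist C C'"
  have pyth: "(dist z C)\<^sup>2 = (dist z C')\<^sup>2 + h\<^sup>2" if "z \<in> A" for z
    using dist_square_orthogonal[OF C'(2)[OF that]] by (simp add: h_def)
  have vC': "(dist v C')\<^sup>2 = R\<^sup>2 - h\<^sup>2" using pyth[OF v(1)] v(2) by simp
  have hR: "h \<le> R"
    using pyth[OF v(1)] v(2) by (metis le_add_same_cancel2 power2_le_imp_le zero_le_dist zero_le_power2)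
  have "(dist q' y)\<^sup>2 - \<rho>\<^sup>2
      = (dist q C)\<^sup>2 - R\<^sup>2 - D\<^sup>2 + 2 * inner (q - q') (C - C') - 2 * inner (q' - v) (y - C')"
  proof -
    have "inner (q - q') (C - q') = inner (q - q') (C - C')"
      using q'(2)[OF C'(1)] by (simp add: inner_diff_right)
    moreover have "inner (q' - C') (y - C') - inner (v - C') (y - C') = inner (q' - v) (y - C')"
      by (simp add: inner_diff_left)
    moreover have "(dist q C)\<^sup>2 = D\<^sup>2 - 2 * inner (q - q') (C - q') + (dist q' C')\<^sup>2 + h\<^sup>2"
      using dist_square_cosine_law[of q C q'] pyth[OF q'(1)] by (simp add: D_def dist_commute)
    ultimately show ?thesis
      using dist_square_cosine_law[of q' y C'] dist_square_cosine_law[of v y C'] vC' v(3)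
      by (simp add: algebra_simps)
  qed
  moreover have "\<bar>inner (q - q') (C - C')\<bar> \<le> D * R"
    using Cauchy_Schwarz_ineq2[of "q - q'" "C - C'"] mult_left_mono[OF hR, of D]
    by (simp add: D_def h_def dist_norm)
  moreover have "\<bar>inner (q' - v) (y - C')\<bar> \<le> L * T"
  proof -
    have "(dist v q)\<^sup>2 = (dist v q')\<^sup>2 + D\<^sup>2" using dist_square_orthogonal q'(2)[OF v(1)] by (simp add: D_def)
    then have "dist v q' \<le> dist q v"
      by (metis dist_commute le_add_same_cancel1 power2_le_imp_le zero_le_dist zero_le_power2)
    then have qL: "norm (q' - v) \<le> L" using v(4) by (simp add: dist_norm norm_minus_commute)
    have "\<bar>inner (q' - v) (y - C')\<bar> \<le> norm (q' - v) * norm (y - C')"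
      by (rule Cauchy_Schwarz_ineq2)
    also have "\<dots> \<le> L * T"
      using qL y(2) by (intro mult_mono) (auto simp: dist_norm intro: order_trans[OF norm_ge_zero])
    finally show ?thesis .
  qed
  ultimately have "\<bar>(dist q' y)\<^sup>2 - \<rho>\<^sup>2\<bar> \<le> \<bar>(dist q C)\<^sup>2 - R\<^sup>2\<bar> + D\<^sup>2 + 2 * D * R + 2 * L * T"
    using zero_le_power2[of D] by linarith
  moreover have "infdist q (sphere y \<rho> \<inter> A) * \<rho> \<le> D * \<rho> + \<bar>(dist q' y)\<^sup>2 - \<rho>\<^sup>2\<bar>"
    unfolding D_def by (rule infdist_sphere_inter_affine_mult_le[OF A q'(1) y(1) v(1,3)])
  ultimately show ?thesis by (simp add: D_def)
qed

lemma near_cospherical_facet_circumsphere: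
  fixes \<tau> :: "'a::euclidean_space set"
  assumes fin: "finite \<tau>" and c3: "card \<tau> \<ge> 3" and p: "p \<in> \<tau>" and q: "q \<in> \<tau>"
    and sph: "\<tau> - {p} \<subseteq> sphere C R" and T0: "0 \<le> T"
    and Tq: "q \<noteq> p \<Longrightarrow> \<bar>(dist p C)\<^sup>2 - R\<^sup>2\<bar> \<le> 2 * T * altitude p (\<tau> - {q})"
    and Dp: "q \<noteq> p \<Longrightarrow> 0 < altitude p (\<tau> - {q})"
  obtains y \<rho> where "y \<in> affine hull (\<tau> - {q})" "\<tau> - {q} \<subseteq> sphere y \<rho>" "\<rho> \<le> R + T"
    "infdist q (sphere y \<rho> \<inter> affine hull (\<tau> - {q})) * \<rho> \<le> altitude q \<tau> * \<rho> + \<bar>(dist q C)\<^sup>2 - R\<^sup>2\<bar>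
        + (altitude q \<tau>)\<^sup>2 + 2 * altitude q \<tau> * R + 2 * simplex_L \<tau> * T"
proof -
  define Aq where "Aq = affine hull (\<tau> - {q})"
  have "\<tau> - {p, q} \<noteq> {}"
  proof
    assume "\<tau> - {p, q} = {}"
    then have "card \<tau> \<le> card {p, q}" by (simp add: card_mono)
    also have "\<dots> \<le> 2" by (simp add: card_insert_le_m1)
    finally show False using c3 by simp
  qed
  then obtain v0 where v0: "v0 \<in> \<tau> - {p, q}" by blast
  have v0A: "v0 \<in> Aq" and v0C: "dist v0 C = R"
    using v0 sph hull_subset[of "\<tau> - {q}" affine] by (auto simp: Aq_def subset_iff dist_commute)
  then have "Aq \<noteq> {}" by blast
  then have Aq: "affine Aq" "closed Aq" "Aq \<noteq> {}" by (simp_all add: Aq_def)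
  obtain C' where C': "C' \<in> Aq" "\<And>z. z \<in> Aq \<Longrightarrow> inner (C - C') (z - C') = 0"
    using affine_nearest_point_orthogonal[OF Aq] by metis
  obtain q' where q': "q' \<in> Aq" "infdist q Aq = dist q q'"
    "\<And>z. z \<in> Aq \<Longrightarrow> inner (q - q') (z - q') = 0"
    using affine_nearest_point_orthogonal[OF Aq] by blast
  obtain y where y: "y \<in> Aq" "\<And>w. w \<in> \<tau> - {q} \<Longrightarrow> dist w y = dist v0 y" "dist y C' \<le> T"
    using near_cospherical_facet_centre[OF p v0 sph T0 C'[unfolded Aq_def] Tq Dp]
    unfolding Aq_def by blast
  define \<rho> where "\<rho> = dist v0 y"
  have "\<tau> - {q} \<subseteq> sphere y \<rho>"
  proof
    fix w assume "w \<in> \<tau> - {q}"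
    then have "dist w y = \<rho>" using y(2) \<rho>_def by blast
    then show "w \<in> sphere y \<rho>" by (simp add: dist_commute)
  qed
  moreover have "dist v0 C' \<le> R"
    using dist_square_orthogonal[OF C'(2)[OF v0A]] v0C
    by (metis le_add_same_cancel1 power2_le_imp_le zero_le_dist zero_le_power2)
  then have "\<rho> \<le> R + T"
    using dist_triangle[of v0 y C'] y(3) by (simp add: \<rho>_def dist_commute)
  moreover have "dist q v0 \<le> simplex_L \<tau>" using v0 by (intro dist_le_simplex_L[OF fin q]) auto
  then have "infdist q (sphere y \<rho> \<inter> Aq) * \<rho> \<le> dist q q' * \<rho> + \<bar>(dist q C)\<^sup>2 - R\<^sup>2\<bar>
      + (dist q q')\<^sup>2 + 2 * dist q q' * R + 2 * simplex_L \<tau> * T"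
    using v0A v0C \<rho>_def by (intro infdist_sphere_near_projected_centre[OF Aq(1) C' q'(1,3) y(1,3)]) auto
  moreover have "altitude q \<tau> = dist q q'" using q'(2) by (simp add: altitude_def Aq_def)
  ultimately show ?thesis using that y(1) by (simp add: Aq_def)
qed

text \<open>The data of a forbidden configuration of the perturbed net, where \<open>s = \<mu>'\<epsilon>'\<close> bounds the
  separation of the perturbed points and \<open>\<delta> = \<delta>\<^sub>0 s\<close>.\<close>
locale near_cospherical_flake =
  fixes \<tau> :: "'a::euclidean_space set" and G \<mu> \<epsilon> s :: real and p C :: 'a and R \<delta> :: real
  assumes finite: "finite \<tau>" and flake: "flake G \<tau>"
    and G_pos: "0 < G" and G_le: "G \<le> 2 * \<mu>\<^sup>2 / 75"
    and mu_pos: "0 < \<mu>" and mu_le_1: "\<mu> \<le> 1" and eps_pos: "0 < \<epsilon>"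
    and s_ge: "\<mu> * \<epsilon> / 2 \<le> s" and s_le: "s \<le> \<mu> * \<epsilon>" and separated: "separated \<tau> s"
    and p: "p \<in> \<tau>" and on_sphere: "\<tau> - {p} \<subseteq> sphere C R" and R_lt: "R < 5 / 4 * \<epsilon>"
    and p_near: "\<bar>dist p C - R\<bar> \<le> \<delta>" and delta_nonneg: "0 \<le> \<delta>"
    and delta_le: "\<delta> \<le> G ^ (card \<tau> - 1) * s"
begin

lemma G_le_mu: "G \<le> 2 * \<mu> / 75"
proof -
  have "\<mu>\<^sup>2 \<le> \<mu>" using mu_pos mu_le_1 by (simp add: power2_eq_square mult_left_le)
  then show ?thesis using G_le by linarith
qed

lemma G_le_half: "G \<le> 1 / 2"
  using G_le_mu mu_le_1 by linarith

lemma card_ge_3: "card \<tau> \<ge> 3"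
  using flake_card_ge_3[OF finite flake G_pos] G_le_half by simp

lemma s_pos: "0 < s"
  using s_ge mult_pos_pos[OF mu_pos eps_pos] by linarith

lemma s_le_2R: "s \<le> 2 * R"
  using card_ge_3 p finite separated on_sphere
  by (intro separated_on_sphere_le[of "\<tau> - {p}"]) (auto simp: card_Diff_singleton separated_def)

lemma R_nonneg: "0 \<le> R"
  using s_le_2R s_pos by linarith

lemma delta_le_G_s: "\<delta> \<le> G * s"
proof -
  have "G ^ (card \<tau> - 1) \<le> G ^ 1"
    using card_ge_3 G_pos G_le_half by (intro power_decreasing) auto
  then have "G ^ (card \<tau> - 1) * s \<le> G * s" using s_pos by (simp add: mult_right_mono)
  then show ?thesis using delta_le by linarith
qed

lemma delta_le_eps: "\<delta> \<le> 2 / 75 * \<epsilon>"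
proof -
  have "G * s \<le> (2 * \<mu> / 75) * (\<mu> * \<epsilon>)"
    using G_le_mu s_le G_pos s_pos by (intro mult_mono) auto
  also have "\<dots> \<le> 2 / 75 * \<epsilon>"
    using mu_pos mu_le_1 eps_pos mult_left_le[of \<mu> \<mu>] by (simp add: mult_le_one)
  finally show ?thesis using delta_le_G_s by linarith
qed

lemma simplex_L_le_2R: "simplex_L \<tau> \<le> 2 * R + \<delta>"
  by (rule simplex_L_le_near_sphere[OF finite p on_sphere p_near delta_nonneg R_nonneg])

lemma simplex_L_le_eps: "simplex_L \<tau> \<le> 13 / 5 * \<epsilon>"
  using simplex_L_le_2R R_lt delta_le_eps eps_pos by linarith

lemma altitude_le:
  assumes "q \<in> \<tau>"
  shows "altitude q \<tau> * \<mu> \<le> 38 * G * \<epsilon>"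
proof -
  define L where "L = simplex_L \<tau>"
  have L: "0 \<le> L" "L \<le> 13 / 5 * \<epsilon>"
    using simplex_L_nonneg[OF finite p] simplex_L_le_eps by (simp_all add: L_def)
  have "G * L \<le> (2 * \<mu> / 75) * (13 / 5 * \<epsilon>)"
    using G_le_mu L G_pos by (intro mult_mono) auto
  also have "\<dots> = 26 / 375 * (\<mu> * \<epsilon>)" by simp
  finally have gap: "9 / 25 * (\<mu> * \<epsilon>) \<le> s - 2 * G * L"
    using s_ge mult_pos_pos[OF mu_pos eps_pos] by (simp only: mult.assoc)
  have "altitude q \<tau> * (9 / 25 * (\<mu> * \<epsilon>)) \<le> altitude q \<tau> * (s - 2 * G * L)"
    by (rule mult_left_mono[OF gap altitude_nonneg])
  also have "\<dots> \<le> 2 * G * L\<^sup>2"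
    unfolding L_def by (rule flake_altitude_bound[OF finite flake G_pos G_le_half separated assms])
  also have "\<dots> \<le> 2 * G * (13 / 5 * \<epsilon>)\<^sup>2"
    using L G_pos by (intro mult_left_mono power_mono) auto
  finally have "(altitude q \<tau> * \<mu>) * (9 / 25 * \<epsilon>) \<le> (338 / 9 * G * \<epsilon>) * (9 / 25 * \<epsilon>)"
    by (simp add: power2_eq_square algebra_simps)
  then have "altitude q \<tau> * \<mu> \<le> 338 / 9 * G * \<epsilon>"
    by (rule mult_right_le_imp_le) (use eps_pos in simp)
  also have "\<dots> \<le> 38 * G * \<epsilon>"
    using G_pos eps_pos by (simp add: mult_right_mono)
  finally show ?thesis .
qed

text \<open>The radius \<open>T\<close> by which the circumcentre of a facet through \<open>p\<close> may move away from the
  projection of \<open>C\<close>: \<open>p\<close> is off the sphere by at most \<open>\<delta>\<close>, but high above the opposite face.\<close>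
lemma facet_perturbation_radius:
  obtains T where "0 \<le> T" "T \<le> 13 / 10 * G * \<epsilon>"
    "\<And>q. q \<in> \<tau> \<Longrightarrow> q \<noteq> p \<Longrightarrow> \<bar>(dist p C)\<^sup>2 - R\<^sup>2\<bar> \<le> 2 * T * altitude p (\<tau> - {q})"
    "\<And>q. q \<in> \<tau> \<Longrightarrow> q \<noteq> p \<Longrightarrow> 0 < altitude p (\<tau> - {q})"
proof -
  define n where "n = card \<tau>"
  define g where "g = G ^ (n - 2) * real (n - 2)"
  have n3: "n \<ge> 3" using card_ge_3 by (simp add: n_def)
  have g0: "0 < g" using n3 G_pos by (simp add: g_def)
  have alt: "g * s \<le> altitude p (\<tau> - {q})" if "q \<in> \<tau>" "q \<noteq> p" for q
    using flake_facet_altitude_ge[OF finite flake G_pos _ separated that(1), of p] G_le_half p that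
    by (simp add: g_def n_def)
  have "\<delta> \<le> G * G ^ (n - 2) * s"
    using delta_le n3 by (simp add: n_def power_Suc[symmetric] Suc_diff_Suc numeral_2_eq_2)
  also have "\<dots> \<le> G * g * s"
    using n3 G_pos s_pos by (intro mult_right_mono mult_left_mono) (auto simp: g_def)
  finally have dg: "\<delta> \<le> G * g * s" .
  define T where "T = \<delta> * (2 * R + \<delta>) / (2 * g * s)"
  have T0: "0 \<le> T" using delta_nonneg R_nonneg g0 s_pos by (simp add: T_def)
  have "T \<le> G * g * s * (2 * R + \<delta>) / (2 * g * s)"
    unfolding T_def using dg R_nonneg delta_nonneg g0 s_pos
    by (intro divide_right_mono mult_right_mono) auto
  also have "\<dots> = G * (2 * R + \<delta>) / 2" using g0 s_pos by simp
  also have "\<dots> \<le> G * (13 / 5 * \<epsilon>) / 2"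
    using R_lt delta_le_eps G_pos eps_pos by (intro divide_right_mono mult_left_mono) auto
  also have "\<dots> = 13 / 10 * G * \<epsilon>" by simp
  finally have "T \<le> 13 / 10 * G * \<epsilon>" .
  moreover have "\<bar>(dist p C)\<^sup>2 - R\<^sup>2\<bar> \<le> 2 * T * altitude p (\<tau> - {q})" if "q \<in> \<tau>" "q \<noteq> p" for q
  proof -
    have "\<bar>(dist p C)\<^sup>2 - R\<^sup>2\<bar> \<le> \<delta> * (2 * R + \<delta>)"
      by (rule abs_square_diff_le[OF p_near zero_le_dist R_nonneg])
    also have "\<dots> = 2 * T * (g * s)" using g0 s_pos by (simp add: T_def)
    also have "\<dots> \<le> 2 * T * altitude p (\<tau> - {q})"
      using alt[OF that] T0 by (intro mult_left_mono) auto
    finally show ?thesis .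
  qed
  moreover have "0 < altitude p (\<tau> - {q})" if "q \<in> \<tau>" "q \<noteq> p" for q
    using alt[OF that] mult_pos_pos[OF g0 s_pos] by linarith
  ultimately show ?thesis using that T0 by blast
qed

lemma altitude_le_eps:
  assumes "q \<in> \<tau>"
  shows "altitude q \<tau> \<le> 76 / 75 * \<epsilon>"
proof -
  have "altitude q \<tau> * \<mu> \<le> 38 * (G * \<epsilon>)" using altitude_le[OF assms] by (simp add: mult.assoc)
  also have "\<dots> \<le> 38 * (2 * \<mu> / 75 * \<epsilon>)"
    using G_le_mu eps_pos by (intro mult_left_mono mult_right_mono) auto
  also have "\<dots> = 76 / 75 * \<epsilon> * \<mu>" by simp
  finally show ?thesis by (rule mult_right_le_imp_le) (use mu_pos in simp)
qed

lemma vertex_sphere_gap_le: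
  assumes q: "q \<in> \<tau>"
  shows "\<bar>(dist q C)\<^sup>2 - R\<^sup>2\<bar> \<le> 13 / 5 * (G * \<epsilon>\<^sup>2)"
proof -
  have "\<bar>(dist q C)\<^sup>2 - R\<^sup>2\<bar> \<le> \<delta> * (2 * R + \<delta>)"
  proof (cases "q = p")
    case True
    then show ?thesis using abs_square_diff_le[OF p_near zero_le_dist R_nonneg] by simp
  next
    case False
    then have "q \<in> sphere C R" using q on_sphere by auto
    then show ?thesis using delta_nonneg R_nonneg by (simp add: dist_commute)
  qed
  also have "\<dots> \<le> (G * \<epsilon>) * (13 / 5 * \<epsilon>)"
  proof (rule mult_mono)
    have "\<mu> * \<epsilon> \<le> 1 * \<epsilon>" using mu_le_1 eps_pos by (intro mult_right_mono) auto
    then have "G * s \<le> G * \<epsilon>" using s_le G_pos by (intro mult_left_mono) auto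
    then show "\<delta> \<le> G * \<epsilon>" using delta_le_G_s by linarith
  qed (use R_lt delta_le_eps R_nonneg delta_nonneg G_pos eps_pos in auto)
  finally show ?thesis by (simp add: power2_eq_square)
qed

lemma facet_circumsphere_close:
  assumes q: "q \<in> \<tau>"
  obtains y \<rho> where "y \<in> affine hull (\<tau> - {q})" "\<tau> - {q} \<subseteq> sphere y \<rho>" "s \<le> 2 * \<rho>"
    "\<rho> < 2 * \<epsilon>" "infdist q (sphere y \<rho> \<inter> affine hull (\<tau> - {q})) * \<rho> * \<mu> \<le> 200 * (G * \<epsilon>\<^sup>2)"
proof -
  obtain T where T: "0 \<le> T" "T \<le> 13 / 10 * G * \<epsilon>"
    "q \<noteq> p \<Longrightarrow> \<bar>(dist p C)\<^sup>2 - R\<^sup>2\<bar> \<le> 2 * T * altitude p (\<tau> - {q})"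
    "q \<noteq> p \<Longrightarrow> 0 < altitude p (\<tau> - {q})"
    using facet_perturbation_radius q by metis
  obtain y \<rho> where y: "y \<in> affine hull (\<tau> - {q})" "\<tau> - {q} \<subseteq> sphere y \<rho>" "\<rho> \<le> R + T"
    and infdist_le: "infdist q (sphere y \<rho> \<inter> affine hull (\<tau> - {q})) * \<rho> \<le> altitude q \<tau> * \<rho>
        + \<bar>(dist q C)\<^sup>2 - R\<^sup>2\<bar> + (altitude q \<tau>)\<^sup>2 + 2 * altitude q \<tau> * R + 2 * simplex_L \<tau> * T"
    using near_cospherical_facet_circumsphere[OF finite card_ge_3 p q on_sphere T(1,3,4)] by blast
  define D where "D = altitude q \<tau>"
  define L where "L = simplex_L \<tau>"
  define e where "e = \<bar>(dist q C)\<^sup>2 - R\<^sup>2\<bar>"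
  have s_le_\<rho>: "s \<le> 2 * \<rho>"
    using card_ge_3 q finite separated y(2)
    by (intro separated_on_sphere_le[of "\<tau> - {q}"]) (auto simp: card_Diff_singleton separated_def)
  have "G * \<epsilon> \<le> 2 / 75 * \<epsilon>" using G_le_mu mu_le_1 eps_pos by (intro mult_right_mono) auto
  then have "T \<le> 13 / 10 * (2 / 75) * \<epsilon>" using T(2)[unfolded mult.assoc] by linarith
  then have \<rho>_le: "\<rho> \<le> 13 / 10 * \<epsilon>" using y(3) R_lt eps_pos by simp
  have D: "0 \<le> D" "D * \<mu> \<le> 38 * G * \<epsilon>" "D \<le> 76 / 75 * \<epsilon>"
    using altitude_nonneg altitude_le[OF q] altitude_le_eps[OF q] by (simp_all add: D_def)
  have e: "0 \<le> e" "e \<le> 13 / 5 * (G * \<epsilon>\<^sup>2)" using vertex_sphere_gap_le[OF q] by (simp_all add: e_def)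
  have "(D * \<mu>) * (\<rho> + D + 2 * R) \<le> (38 * G * \<epsilon>) * (5 * \<epsilon>)"
  proof (rule mult_mono)
  qed (use D \<rho>_le R_lt R_nonneg s_le_\<rho> s_pos G_pos eps_pos in auto)
  moreover have "e * \<mu> \<le> e" using e mu_le_1 by (simp add: mult_left_le)
  moreover have "2 * L * T * \<mu> \<le> 2 * (13 / 5 * \<epsilon>) * (13 / 10 * G * \<epsilon>)"
  proof -
    have L: "0 \<le> L" "L \<le> 13 / 5 * \<epsilon>"
      using simplex_L_nonneg[OF finite p] simplex_L_le_eps by (simp_all add: L_def)
    have "2 * L * T * \<mu> \<le> 2 * L * T" using L T mu_le_1 by (simp add: mult_left_le)
    also have "\<dots> \<le> 2 * (13 / 5 * \<epsilon>) * (13 / 10 * G * \<epsilon>)"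
      using L T by (intro mult_mono) auto
    finally show ?thesis .
  qed
  ultimately have "(D * \<rho> + e + D\<^sup>2 + 2 * D * R + 2 * L * T) * \<mu> \<le> 200 * (G * \<epsilon>\<^sup>2)"
    using e G_pos eps_pos by (simp add: power2_eq_square algebra_simps)
  moreover have "infdist q (sphere y \<rho> \<inter> affine hull (\<tau> - {q})) * \<rho> * \<mu>
      \<le> (D * \<rho> + e + D\<^sup>2 + 2 * D * R + 2 * L * T) * \<mu>"
    using infdist_le mu_pos by (simp add: D_def e_def L_def)
  moreover have "\<rho> < 2 * \<epsilon>" using \<rho>_le eps_pos by simp
  ultimately show ?thesis using that y(1,2) s_le_\<rho> by fastforce
qed

text \<open>The lower bound \<open>\<rho> \<ge> \<mu> \<epsilon> / 4\<close> turns \<open>200 G \<epsilon>\<^sup>2\<close> into the hoop constant, with room to spare.\<close>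
lemma facet_hoop:
  assumes q: "q \<in> \<tau>"
  shows "has_circumball (\<tau> - {q}) \<and> circumradius (\<tau> - {q}) < 2 * \<epsilon> \<and>
    circumsphere (\<tau> - {q}) \<noteq> {} \<and>
    infdist q (circumsphere (\<tau> - {q})) \<le> 2 * (16 / \<mu>) ^ 3 * G * circumradius (\<tau> - {q})"
proof -
  obtain y \<rho> where y: "y \<in> affine hull (\<tau> - {q})" "\<tau> - {q} \<subseteq> sphere y \<rho>" "s \<le> 2 * \<rho>"
    "\<rho> < 2 * \<epsilon>" and close: "infdist q (sphere y \<rho> \<inter> affine hull (\<tau> - {q})) * \<rho> * \<mu> \<le> 200 * (G * \<epsilon>\<^sup>2)"
    using facet_circumsphere_close[OF q] by blast
  have "card (\<tau> - {q}) \<ge> 2" using card_ge_3 q finite by (simp add: card_Diff_singleton)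
  then have "\<tau> - {q} \<noteq> {}" by (metis card.empty not_numeral_le_zero)
  note circ = circumball_centred_in_affine_hull[OF this y(1,2)]
  have sph: "circumsphere (\<tau> - {q}) = sphere y \<rho> \<inter> affine hull (\<tau> - {q})"
    by (simp add: circumsphere_def circ)
  define \<alpha> where "\<alpha> = 2 * (16 / \<mu>) ^ 3 * G"
  have \<rho>: "\<mu> * \<epsilon> / 4 \<le> \<rho>" using y(3) s_ge by linarith
  have "200 * (G * \<epsilon>\<^sup>2) \<le> \<alpha> * \<mu> * (\<mu> * \<epsilon> / 4)\<^sup>2"
    using mu_pos G_pos eps_pos by (simp add: \<alpha>_def power2_eq_square power3_eq_cube field_simps)
  also have "\<dots> \<le> \<alpha> * \<mu> * \<rho>\<^sup>2"
    using \<rho> mu_pos eps_pos G_pos by (intro mult_left_mono power_mono) (auto simp: \<alpha>_def)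
  finally have "(infdist q (circumsphere (\<tau> - {q})) * \<mu>) * \<rho> \<le> (\<alpha> * \<rho> * \<mu>) * \<rho>"
    using close by (simp add: sph power2_eq_square ac_simps)
  moreover have "0 < \<rho>" using \<rho> mult_pos_pos[OF mu_pos eps_pos] by linarith
  ultimately have "infdist q (circumsphere (\<tau> - {q})) \<le> \<alpha> * \<rho>"
    using mu_pos by (meson mult_right_le_imp_le)
  moreover have "circumsphere (\<tau> - {q}) \<noteq> {}"
    using \<open>\<tau> - {q} \<noteq> {}\<close> y(2) hull_subset[of "\<tau> - {q}" affine] sph by blast
  ultimately show ?thesis using circ y(4) by (simp add: \<alpha>_def)
qed

lemma hoop_simplex:
  shows "hoop (2 * (16 / \<mu>) ^ 3 * G) \<tau>"
    and "\<forall>q\<in>\<tau>. has_circumball (\<tau> - {q}) \<and> circumradius (\<tau> - {q}) < 2 * \<epsilon>"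
  using facet_hoop unfolding hoop_def by blast+

end

lemma finite_perturbation: "is_perturbation P P' r \<Longrightarrow> finite P \<Longrightarrow> finite P'"
  unfolding is_perturbation_def by (metis bij_betw_finite)

lemma separated_perturbation:
  assumes pert: "is_perturbation P P' r" and sep: "separated P d"
  shows "separated P' (d - 2 * r)"
  unfolding separated_def
proof (intro ballI impI)
  obtain \<zeta> where \<zeta>: "bij_betw \<zeta> P P'" "\<And>p. p \<in> P \<Longrightarrow> dist (\<zeta> p) p \<le> r"
    using pert by (auto simp: is_perturbation_def)
  fix u w assume "u \<in> P'" "w \<in> P'" "u \<noteq> w"
  then obtain a b where ab: "a \<in> P" "b \<in> P" "u = \<zeta> a" "w = \<zeta> b" "a \<noteq> b"
    using \<zeta>(1) by (auto simp: bij_betw_def)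
  have "d \<le> dist a b" using sep ab by (simp add: separated_def)
  also have "\<dots> \<le> dist a u + dist u w + dist w b"
    using dist_triangle[of a w u] dist_triangle[of a b w] by linarith
  finally show "d - 2 * r \<le> dist u w"
    using \<zeta>(2)[of a] \<zeta>(2)[of b] ab by (simp add: dist_commute)
qed

lemma ball_subset_convex_hull_if_in_D_eps:
  assumes x: "x \<in> D_eps P e"
  shows "ball x e \<subseteq> convex hull P"
proof
  fix y assume y: "y \<in> ball x e"
  show "y \<in> convex hull P"
  proof (rule ccontr)
    assume "y \<notin> convex hull P"
    then have "closed_segment x y \<inter> frontier (convex hull P) \<noteq> {}"
      using x by (intro connected_Int_frontier) (auto simp: D_eps_def)
    then obtain f where f: "f \<in> closed_segment x y" "f \<in> frontier (convex hull P)" by blast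
    have "dist f x \<le> dist x y" using dist_in_closed_segment[OF f(1)] by simp
    then have "infdist x (frontier (convex hull P)) < e"
      using infdist_le[OF f(2), of x] y by (simp add: dist_commute)
    then show False using x by (simp add: D_eps_def)
  qed
qed

text \<open>A point of \<open>P\<close> is moved by at most \<open>r\<close>, so a half-space containing \<open>P\<close> moved back by \<open>r\<close>
  contains \<open>P'\<close>; a point outside \<open>conv P\<close> thus yields a point outside \<open>conv P'\<close> within \<open>r\<close>.\<close>
lemma ball_subset_convex_hull_perturbation:
  fixes P :: "'a::euclidean_space set"
  assumes fin: "finite P" and ne: "P \<noteq> {}" and pert: "is_perturbation P P' r" and r: "0 \<le> r"
    and ball: "ball x (e + r) \<subseteq> convex hull P'"
  shows "ball x e \<subseteq> convex hull P"
proof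
  obtain \<zeta> where \<zeta>: "bij_betw \<zeta> P P'" "\<And>p. p \<in> P \<Longrightarrow> dist (\<zeta> p) p \<le> r"
    using pert by (auto simp: is_perturbation_def)
  fix y assume y: "y \<in> ball x e"
  show "y \<in> convex hull P"
  proof (rule ccontr)
    assume "y \<notin> convex hull P"
    moreover have "closed (convex hull P)"
      using fin by (simp add: finite_imp_compact_convex_hull compact_imp_closed)
    ultimately obtain a b where ab: "inner a y < b" "\<And>k. k \<in> convex hull P \<Longrightarrow> b < inner a k"
      using separating_hyperplane_closed_point[OF convex_convex_hull] by blast
    obtain k0 where "k0 \<in> P" using ne by blast
    then have a0: "a \<noteq> 0" using ab(1) ab(2)[of k0] by (auto simp: hull_inc)
    define w where "w = y - (r / norm a) *\<^sub>R a"
    have "dist y w = r" using a0 r by (simp add: w_def dist_norm)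
    then have "dist x w < e + r" using dist_triangle[of x w y] y by simp
    then have "w \<in> convex hull P'" using ball by auto
    moreover have "P' \<subseteq> {k. b - norm a * r \<le> inner a k}"
    proof
      fix k assume "k \<in> P'"
      then obtain p where p: "p \<in> P" "k = \<zeta> p" using \<zeta>(1) by (auto simp: bij_betw_def)
      have "\<bar>inner a (\<zeta> p - p)\<bar> \<le> norm a * norm (\<zeta> p - p)" by (rule Cauchy_Schwarz_ineq2)
      also have "\<dots> \<le> norm a * r" using \<zeta>(2)[OF p(1)] by (simp add: dist_norm mult_left_mono)
      finally have "\<bar>inner a (\<zeta> p - p)\<bar> \<le> norm a * r" .
      moreover have "b < inner a p" using ab(2) p(1) by (simp add: hull_inc)
      ultimately show "k \<in> {k. b - norm a * r \<le> inner a k}" using p by (simp add: inner_diff_right)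
    qed
    then have "convex hull P' \<subseteq> {k. b - norm a * r \<le> inner a k}"
      by (rule hull_minimal) (rule convex_halfspace_ge)
    moreover have "inner a w = inner a y - norm a * r"
      using a0 by (simp add: w_def inner_diff_right power2_norm_eq_inner[symmetric] power2_eq_square)
    ultimately show False using ab(1) by auto
  qed
qed

lemma eps_dense_obtains_near_point:
  assumes fin: "finite P" and dense: "eps_dense P e" and ball: "ball x e \<subseteq> convex hull P"
    and e: "0 < e"
  obtains z where "z \<in> P" "dist x z < e"
proof -
  have xK: "x \<in> convex hull P" using ball e by auto
  then have "P \<noteq> {}" by auto
  moreover have "closed (P \<union> frontier (convex hull P))" using fin by (simp add: closed_Un finite_imp_closed)
  ultimately obtain z where z: "z \<in> P \<union> frontier (convex hull P)"
    "infdist x (P \<union> frontier (convex hull P)) = dist x z"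
    using infdist_attains_inf by blast
  moreover have "infdist x (P \<union> frontier (convex hull P)) < e"
    using dense xK by (simp add: eps_dense_def)
  ultimately have "dist x z < e" by simp
  moreover have "z \<notin> frontier (convex hull P)"
    using interior_maximal[OF ball] calculation by (auto simp: frontier_def)
  ultimately show ?thesis using z(1) that by blast
qed

lemma D_eps_perturbation_near_point:
  fixes P :: "'a::euclidean_space set"
  assumes fin: "finite P" and dense: "eps_dense P e" and e: "0 < e"
    and pert: "is_perturbation P P' r" and r: "0 \<le> r" and x: "x \<in> D_eps P' (e + r)"
  obtains z where "z \<in> P'" "dist x z < e + r"
proof -
  obtain \<zeta> where \<zeta>: "bij_betw \<zeta> P P'" "\<And>p. p \<in> P \<Longrightarrow> dist (\<zeta> p) p \<le> r"
    using pert by (auto simp: is_perturbation_def)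
  have "P' \<noteq> {}" using x by (auto simp: D_eps_def)
  then have "P \<noteq> {}" using \<zeta>(1) by (auto simp: bij_betw_def)
  then have "ball x e \<subseteq> convex hull P"
    using ball_subset_convex_hull_perturbation[OF fin _ pert r ball_subset_convex_hull_if_in_D_eps[OF x]]
    by blast
  then obtain z where z: "z \<in> P" "dist x z < e" using eps_dense_obtains_near_point[OF fin dense _ e] by blast
  then have "dist x (\<zeta> z) < e + r" using \<zeta>(2)[OF z(1)] dist_triangle[of x "\<zeta> z" z]
    by (simp add: dist_commute)
  then show ?thesis using that z(1) \<zeta>(1) by (auto simp: bij_betw_def)
qed

lemma Del_D_obtains_small_ball:
  assumes \<sigma>: "\<sigma> \<in> Del_D P e" and near: "\<And>x. x \<in> D_eps P e \<Longrightarrow> \<exists>z\<in>P. dist x z < e"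
  obtains x r where "\<sigma> \<subseteq> P" "delaunay_ball P x r" "\<sigma> \<subseteq> sphere x r" "r < e"
proof -
  obtain x r where x: "\<sigma> \<subseteq> P" "delaunay_ball P x r" "\<sigma> \<subseteq> sphere x r" "x \<in> D_eps P e"
    using \<sigma> unfolding Del_D_def by blast
  obtain z where "z \<in> P" "dist x z < e" using near[OF x(4)] by blast
  moreover have "z \<notin> ball x r" using x(2) \<open>z \<in> P\<close> by (auto simp: delaunay_ball_def)
  ultimately have "r < e" by simp
  then show ?thesis using that x by blast
qed

lemma flake_on_sphere_forbidden_config:
  fixes \<tau> :: "'a::euclidean_space set"
  assumes "\<tau> \<subseteq> P" "finite \<tau>" "card \<tau> \<le> DIM('a) + 2" "flake G \<tau>" "0 < G" "G \<le> 1"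
    and "p \<in> \<tau>" "\<tau> - {p} \<subseteq> sphere x r" "r < \<epsilon>'" "\<bar>dist p x - r\<bar> \<le> \<delta>\<^sub>0 * \<mu>' * \<epsilon>'"
  shows "forbidden_config P \<mu>' \<epsilon>' G \<delta>\<^sub>0 \<tau>"
proof -
  have "2 \<le> card \<tau>" using flake_card_ge_3[OF assms(2,4,5,6)] by simp
  moreover have "circumscribes (\<tau> - {p}) x r" using assms(8) by (simp add: circumscribes_def)
  ultimately show ?thesis using assms unfolding forbidden_config_def by blast
qed

context
  fixes P :: "'a::euclidean_space set" and \<mu>' \<epsilon>' G \<delta>\<^sub>0 :: real
  assumes finite: "finite P"
    and no_forbidden: "\<And>\<tau>. \<not> forbidden_config P \<mu>' \<epsilon>' G \<delta>\<^sub>0 \<tau>"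
    and near: "\<And>x. x \<in> D_eps P \<epsilon>' \<Longrightarrow> \<exists>z\<in>P. dist x z < \<epsilon>'"
    and G: "0 < G" "G \<le> 1" and delta_nonneg: "0 \<le> \<delta>\<^sub>0 * \<mu>' * \<epsilon>'"
begin

lemma Del_D_good:
  assumes \<sigma>: "\<sigma> \<in> Del_D P \<epsilon>'" and card: "card \<sigma> \<le> DIM('a) + 2"
  shows "good G \<sigma>"
proof (rule ccontr)
  obtain x r where x: "\<sigma> \<subseteq> P" "delaunay_ball P x r" "\<sigma> \<subseteq> sphere x r" "r < \<epsilon>'"
    using Del_D_obtains_small_ball[OF \<sigma> near] by blast
  have fin: "finite \<sigma>" using x(1) finite finite_subset by blast
  assume "\<not> good G \<sigma>"
  then obtain \<tau> where \<tau>: "\<tau> \<subseteq> \<sigma>" "flake G \<tau>" using exists_flake_subset[OF fin] by blast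
  have f\<tau>: "finite \<tau>" using finite_subset[OF \<tau>(1) fin] .
  have "card \<tau> \<ge> 3" using flake_card_ge_3[OF f\<tau> \<tau>(2) G] .
  then obtain p where p: "p \<in> \<tau>" by (metis card.empty ex_in_conv not_numeral_le_zero)
  have "p \<in> sphere x r" using p \<tau>(1) x(3) by blast
  then have "\<bar>dist p x - r\<bar> \<le> \<delta>\<^sub>0 * \<mu>' * \<epsilon>'" using delta_nonneg by (simp add: dist_commute)
  then have "forbidden_config P \<mu>' \<epsilon>' G \<delta>\<^sub>0 \<tau>"
    using \<tau>(1) x(1,3,4) card card_mono[OF fin \<tau>(1)]
    by (intro flake_on_sphere_forbidden_config[OF _ f\<tau> _ \<tau>(2) G p]) auto
  then show False using no_forbidden by blast
qed

lemma Del_D_protected: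
  assumes \<sigma>: "\<sigma> \<in> Del_D P \<epsilon>'" and card: "card \<sigma> = DIM('a) + 1"
  shows "protected P (\<delta>\<^sub>0 * \<mu>' * \<epsilon>') \<sigma>"
  unfolding protected_def
proof -
  obtain x r where x: "\<sigma> \<subseteq> P" "delaunay_ball P x r" "\<sigma> \<subseteq> sphere x r" "r < \<epsilon>'"
    using Del_D_obtains_small_ball[OF \<sigma> near] by blast
  have fin: "finite \<sigma>" using x(1) finite finite_subset by blast
  have good: "good G \<sigma>" using Del_D_good[OF \<sigma>] card by simp
  have "\<delta>\<^sub>0 * \<mu>' * \<epsilon>' < infdist q (sphere x r)" if q: "q \<in> P - \<sigma>" for q
  proof (rule ccontr)
    assume far: "\<not> \<delta>\<^sub>0 * \<mu>' * \<epsilon>' < infdist q (sphere x r)"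
    have fX: "finite (insert q \<sigma>)" and cX: "card (insert q \<sigma>) = DIM('a) + 2"
      using q fin card by simp_all
    have "affine_dependent (insert q \<sigma>)" by (rule affine_dependent_biggerset[OF fX]) (simp add: cX)
    then have "\<not> good G (insert q \<sigma>)" by (rule affine_dependent_not_good[OF fX _ G(1)])
    then obtain \<tau> where \<tau>: "\<tau> \<subseteq> insert q \<sigma>" "flake G \<tau>" using exists_flake_subset[OF fX] by blast
    have "q \<in> \<tau>"
    proof (rule ccontr)
      assume "q \<notin> \<tau>"
      then have "good G \<tau>" using \<tau>(1) good_subset[OF good] by blast
      then show False using \<tau>(2) by (simp add: flake_def)
    qed
    moreover obtain z0 where "z0 \<in> \<sigma>" using card by fastforce
    then have "\<bar>dist q x - r\<bar> \<le> infdist q (sphere x r)"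
      using x(3) by (intro abs_dist_sphere_le_infdist[of z0]) auto
    ultimately have "forbidden_config P \<mu>' \<epsilon>' G \<delta>\<^sub>0 \<tau>"
      using \<tau>(1) x(1,3,4) q far card_mono[OF fX \<tau>(1)] cX
      by (intro flake_on_sphere_forbidden_config[OF _ finite_subset[OF \<tau>(1) fX] _ \<tau>(2) G]) auto
    then show False using no_forbidden by blast
  qed
  then show "\<exists>x r. delaunay_ball P x r \<and> \<sigma> \<subseteq> sphere x r \<and>
      (\<forall>q\<in>P - \<sigma>. \<delta>\<^sub>0 * \<mu>' * \<epsilon>' < infdist q (sphere x r))"
    using x by blast
qed

end

lemma forbidden_config_hoop_simplex:
  fixes P P' :: "'a::euclidean_space set"
  assumes net: "is_net P \<mu> \<epsilon>" and rho: "0 < \<rho>\<^sub>0" "\<rho>\<^sub>0 \<le> \<mu> / 4"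
    and pert: "is_perturbation P P' (\<rho>\<^sub>0 * \<epsilon>)"
    and G: "0 < G" "G \<le> 2 * \<mu>\<^sup>2 / 75" and delta: "0 \<le> \<delta>\<^sub>0" "\<delta>\<^sub>0 \<le> G ^ (DIM('a) + 1)"
    and fc: "forbidden_config P' ((\<mu> - 2 * \<rho>\<^sub>0) / (1 + \<rho>\<^sub>0)) ((1 + \<rho>\<^sub>0) * \<epsilon>) G \<delta>\<^sub>0 \<tau>"
  shows "\<tau> \<subseteq> P' \<and> \<tau> \<noteq> {} \<and> hoop (2 * (16 / \<mu>) ^ 3 * G) \<tau> \<and>
    (\<forall>p\<in>\<tau>. has_circumball (\<tau> - {p}) \<and> circumradius (\<tau> - {p}) < 2 * \<epsilon>) \<and>
    simplex_L \<tau> < 5 / 2 * (1 + 1 / 2 * \<delta>\<^sub>0 * \<mu>) * \<epsilon> \<and>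
    (\<forall>\<sigma>. \<sigma> \<subseteq> \<tau> \<and> \<sigma> \<noteq> {} \<and> card \<sigma> = card \<tau> - 1 \<longrightarrow> good G \<sigma>)"
proof -
  have fin: "finite P" and mu: "0 < \<mu>" "\<mu> \<le> 1" and eps: "0 < \<epsilon>"
    and sep: "separated P (\<mu> * \<epsilon>)"
    using net by (auto simp: is_net_def)
  define s where "s = (\<mu> - 2 * \<rho>\<^sub>0) * \<epsilon>"
  have s_eq: "\<delta>\<^sub>0 * ((\<mu> - 2 * \<rho>\<^sub>0) / (1 + \<rho>\<^sub>0)) * ((1 + \<rho>\<^sub>0) * \<epsilon>) = \<delta>\<^sub>0 * s"
    using rho by (simp add: s_def)
  obtain p C R where \<tau>: "\<tau> \<subseteq> P'" "2 \<le> card \<tau>" "card \<tau> \<le> DIM('a) + 2" "flake G \<tau>"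
    and p: "p \<in> \<tau>" "circumscribes (\<tau> - {p}) C R" "R < (1 + \<rho>\<^sub>0) * \<epsilon>"
      "\<bar>dist p C - R\<bar> \<le> \<delta>\<^sub>0 * s"
    using fc unfolding forbidden_config_def s_eq by blast
  have fin\<tau>: "finite \<tau>" using \<tau>(1) finite_perturbation[OF pert fin] finite_subset by blast
  have "separated P' (\<mu> * \<epsilon> - 2 * (\<rho>\<^sub>0 * \<epsilon>))" by (rule separated_perturbation[OF pert sep])
  then have sep\<tau>: "separated \<tau> s" using \<tau>(1) by (auto simp: separated_def s_def algebra_simps)
  have "\<mu> / 2 * \<epsilon> \<le> (\<mu> - 2 * \<rho>\<^sub>0) * \<epsilon>" "(\<mu> - 2 * \<rho>\<^sub>0) * \<epsilon> \<le> \<mu> * \<epsilon>"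
    using rho eps by (intro mult_right_mono; simp)+
  then have s_bounds: "\<mu> * \<epsilon> / 2 \<le> s" "s \<le> \<mu> * \<epsilon>" by (simp_all add: s_def)
  have "\<mu>\<^sup>2 \<le> 1" using mu by (simp add: power_le_one)
  then have "G ^ (DIM('a) + 1) \<le> G ^ (card \<tau> - 1)"
    using \<tau>(3) G by (intro power_decreasing) auto
  then have "\<delta>\<^sub>0 \<le> G ^ (card \<tau> - 1)" using delta(2) by linarith
  then have delta_le: "\<delta>\<^sub>0 * s \<le> G ^ (card \<tau> - 1) * s"
    using s_bounds mu eps by (intro mult_right_mono) auto
  have "(1 + \<rho>\<^sub>0) * \<epsilon> \<le> 5 / 4 * \<epsilon>" using rho mu eps by (intro mult_right_mono) auto
  then have R_lt: "R < 5 / 4 * \<epsilon>" using p(3) by linarith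
  interpret near_cospherical_flake \<tau> G \<mu> \<epsilon> s p C R "\<delta>\<^sub>0 * s"
    using fin\<tau> \<tau>(4) G mu eps s_bounds sep\<tau> p R_lt delta delta_le s_bounds
    by unfold_locales (auto simp: circumscribes_def)
  have "simplex_L \<tau> < 5 / 2 * \<epsilon> + \<delta>\<^sub>0 * (\<mu> * \<epsilon>)"
    using simplex_L_le_2R R_lt s_bounds delta mult_left_mono[of s "\<mu> * \<epsilon>" \<delta>\<^sub>0] by linarith
  also have "\<dots> \<le> 5 / 2 * (1 + 1 / 2 * \<delta>\<^sub>0 * \<mu>) * \<epsilon>"
    using delta mu eps by (simp add: algebra_simps)
  finally have "simplex_L \<tau> < 5 / 2 * (1 + 1 / 2 * \<delta>\<^sub>0 * \<mu>) * \<epsilon>" .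
  moreover have "good G \<sigma>" if "\<sigma> \<subseteq> \<tau>" "\<sigma> \<noteq> {}" "card \<sigma> = card \<tau> - 1" for \<sigma>
    using that \<tau>(2,4) unfolding flake_def by (metis diff_less less_le_trans not_less_iff_gr_or_eq
        pos2 psubsetI zero_less_one)
  ultimately show ?thesis using \<tau>(1) p(1) hoop_simplex by blast
qed

theorem mainTheorem11:
  fixes P P' :: "'a::euclidean_space set"
    and \<mu> \<epsilon> \<rho>\<^sub>0 \<Gamma>\<^sub>0 \<delta>\<^sub>0 :: real
  assumes net: "is_net P \<mu> \<epsilon>"
    and rho_pos: "0 < \<rho>\<^sub>0" and rho_le: "\<rho>\<^sub>0 \<le> \<mu> / 4"
    and pert: "is_perturbation P P' (\<rho>\<^sub>0 * \<epsilon>)"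
    and Gamma_pos: "0 < \<Gamma>\<^sub>0" and Gamma_le1: "\<Gamma>\<^sub>0 \<le> 1"
    and delta_nonneg: "0 \<le> \<delta>\<^sub>0"
    and delta_le: "\<delta>\<^sub>0 \<le> \<Gamma>\<^sub>0 ^ (DIM('a) + 1)"
    and Gamma_le: "\<Gamma>\<^sub>0 \<le> 2 * \<mu>\<^sup>2 / 75"
    and no_tau: "\<not> (\<exists>\<tau>. \<tau> \<subseteq> P' \<and> \<tau> \<noteq> {} \<and>
            hoop (2 * (16 / \<mu>) ^ 3 * \<Gamma>\<^sub>0) \<tau> \<and>
            (\<forall>p\<in>\<tau>. has_circumball (\<tau> - {p}) \<and> circumradius (\<tau> - {p}) < 2 * \<epsilon>) \<and>
            simplex_L \<tau> < 5 / 2 * (1 + 1 / 2 * \<delta>\<^sub>0 * \<mu>) * \<epsilon> \<and>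
            (\<forall>\<sigma>. \<sigma> \<subseteq> \<tau> \<and> \<sigma> \<noteq> {} \<and> card \<sigma> = card \<tau> - 1 \<longrightarrow> good \<Gamma>\<^sub>0 \<sigma>))"
  shows "(\<forall>\<tau>. \<not> forbidden_config P' ((\<mu> - 2 * \<rho>\<^sub>0) / (1 + \<rho>\<^sub>0)) ((1 + \<rho>\<^sub>0) * \<epsilon>) \<Gamma>\<^sub>0 \<delta>\<^sub>0 \<tau>)
    \<and> (\<forall>\<sigma> \<in> Del_D P' ((1 + \<rho>\<^sub>0) * \<epsilon>). card \<sigma> = DIM('a) + 1 \<longrightarrow>
         good \<Gamma>\<^sub>0 \<sigma> \<and>
         protected P' (\<delta>\<^sub>0 * ((\<mu> - 2 * \<rho>\<^sub>0) / (1 + \<rho>\<^sub>0)) * ((1 + \<rho>\<^sub>0) * \<epsilon>)) \<sigma>)"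
proof -
  have fin: "finite P" and dense: "eps_dense P \<epsilon>" and eps: "0 < \<epsilon>"
    using net by (auto simp: is_net_def)
  have no_forbidden: "\<not> forbidden_config P' ((\<mu> - 2 * \<rho>\<^sub>0) / (1 + \<rho>\<^sub>0)) ((1 + \<rho>\<^sub>0) * \<epsilon>) \<Gamma>\<^sub>0 \<delta>\<^sub>0 \<tau>" for \<tau>
    using forbidden_config_hoop_simplex[OF net rho_pos rho_le pert Gamma_pos Gamma_le delta_nonneg delta_le]
      no_tau by blast
  have near: "\<exists>z\<in>P'. dist x z < (1 + \<rho>\<^sub>0) * \<epsilon>" if "x \<in> D_eps P' ((1 + \<rho>\<^sub>0) * \<epsilon>)" for x
    using D_eps_perturbation_near_point[OF fin dense eps pert, of x] rho_pos eps that
    by (auto simp: algebra_simps)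
  have "0 \<le> \<delta>\<^sub>0 * ((\<mu> - 2 * \<rho>\<^sub>0) / (1 + \<rho>\<^sub>0)) * ((1 + \<rho>\<^sub>0) * \<epsilon>)"
    using delta_nonneg rho_pos rho_le eps by simp
  note Del_D = Del_D_good[OF finite_perturbation[OF pert fin] no_forbidden near Gamma_pos Gamma_le1 this]
    Del_D_protected[OF finite_perturbation[OF pert fin] no_forbidden near Gamma_pos Gamma_le1 this]
  show ?thesis using no_forbidden Del_D by simp
qed

end
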